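(* Let $A\subseteq\mathbb{Z}^n$ be finite with $\operatorname{conv}(A)$ of dimension $n$. A polynomial $f\in\mathbb{R}[t^{\pm1}]_A$ is strictly $A$-copositive if and only if both (i) $f_{\mathrm{cox}}(x)\ge0$ for all $x\in\mathbb{R}^r_{\ge0}$, and (ii) $\{x\in\mathbb{R}^r_{\ge0}: f_{\mathrm{cox}}(x)=0\}=Z_A\cap\mathbb{R}^r_{\ge0}$.
   Context: Cox setup: $\Sigma_A$ inner normal fan of $\operatorname{conv}(A)$, rays $1,\dots,r$ with primitive generators $F_i$ forming the columns of $F\in\mathbb{Z}^{n\times r}$, $b\in\mathbb{Z}^r$ with $\operatorname{conv}(A)=\{a:F^\top a+b\ge0\}$, $f_{\mathrm{cox}}=\sum_ac_ax^{F^\top a+b}$ for $f=\sum_ac_at^a$. $B(A)=\langle\prod_{i\notin\sigma}x_i:\sigma$ maximal cone of $\Sigma_A\rangle$ and $Z_A$ is its complex vanishing locus. With $A=\{a_1,\dots,a_m\}$, let $Y_{\hat A}$ be the Zariski closure in $\mathbb{C}^m$ of $\{(ut^{a_1},\dots,ut^{a_m}):(u,t)\in(\mathbb{C}^* )^{n+1}\}$; $f$ is strictly $A$-copositive if the linear form $y\mapsto\sum_j c_{a_j}y_j$ is positive on $Y_{\hat A}\cap\mathbb{R}^m_{\ge0}\setminus\{0\}$ (equivalently, $f$ is in the interior of the cone of $g\in\mathbb{R}[t^{\pm1}]_A$ with $g\ge0$ on $\mathbb{R}^n_{>0}$). *)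

theory Defs
  imports "HOL-Analysis.Analysis"
begin

definition realv :: "int^'n \<Rightarrow> real^'n" where
  "realv a = (\<chi> i. of_int (a $ i))"

definition convA :: "(int^'n) set \<Rightarrow> (real^'n) set" where
  "convA A = convex hull (realv ` A)"

definition inner_normal_cone :: "(real^'n) set \<Rightarrow> (real^'n) set \<Rightarrow> (real^'n) set" where
  "inner_normal_cone P G = {u. \<forall>y\<in>G. \<forall>x\<in>P. u \<bullet> y \<le> u \<bullet> x}"

definition normal_fan :: "(int^'n) set \<Rightarrow> (real^'n) set set" where
  "normal_fan A = {inner_normal_cone (convA A) G | G. G face_of convA A \<and> G \<noteq> {}}"

text \<open>Rays (one-dimensional cones) of Sigma_A; they index the Cox variables x_rho.\<close>
definition fan_rays :: "(int^'n) set \<Rightarrow> (real^'n) set set" where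
  "fan_rays A = {\<sigma> \<in> normal_fan A. aff_dim \<sigma> = 1}"

definition max_cones :: "(int^'n) set \<Rightarrow> (real^'n) set set" where
  "max_cones A = {\<sigma> \<in> normal_fan A. \<forall>\<tau>\<in>normal_fan A. \<sigma> \<subseteq> \<tau> \<longrightarrow> \<tau> = \<sigma>}"

definition prim_gen :: "(real^'n) set \<Rightarrow> int^'n \<Rightarrow> bool" where
  "prim_gen \<rho> v \<longleftrightarrow> v \<noteq> 0 \<and> realv v \<in> \<rho> \<and>
     (\<forall>w. w \<noteq> 0 \<and> realv w \<in> \<rho> \<longrightarrow> (\<exists>k::int. k \<ge> 1 \<and> w = k *s v))"

definition idot :: "int^'n \<Rightarrow> int^'n \<Rightarrow> int" where
  "idot u a = (\<Sum>i\<in>UNIV. u $ i * a $ i)"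

text \<open>R^r_{>=0}, coordinates indexed by the rays (extensional: zero off the rays).\<close>
definition nonneg_orthant :: "(int^'n) set \<Rightarrow> ((real^'n) set \<Rightarrow> real) set" where
  "nonneg_orthant A = {x. (\<forall>\<rho>\<in>fan_rays A. x \<rho> \<ge> 0) \<and> (\<forall>\<rho>. \<rho> \<notin> fan_rays A \<longrightarrow> x \<rho> = 0)}"

text \<open>Cox homogenisation f_cox = sum_a c_a x^(F^T a + b) of f = sum_{a in A} c_a t^a.
  The exponents F^T a + b are nonnegative for a in A (since A is contained in conv(A)).\<close>
definition f_cox :: "(int^'n) set \<Rightarrow> ((real^'n) set \<Rightarrow> int^'n) \<Rightarrow> ((real^'n) set \<Rightarrow> int)
     \<Rightarrow> (int^'n \<Rightarrow> real) \<Rightarrow> ((real^'n) set \<Rightarrow> real) \<Rightarrow> real" where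
  "f_cox A F b c x = (\<Sum>a\<in>A. c a * (\<Prod>\<rho>\<in>fan_rays A. x \<rho> ^ nat (idot (F \<rho>) a + b \<rho>)))"

text \<open>Z_A: complex vanishing locus of B(A) = < prod_{rho not in sigma} x_rho : sigma maximal cone >,
  i.e. the common zeros of the generators.\<close>
definition Z_A :: "(int^'n) set \<Rightarrow> ((real^'n) set \<Rightarrow> complex) set" where
  "Z_A A = {x. \<forall>\<sigma>\<in>max_cones A. (\<Prod>\<rho>\<in>{\<rho>\<in>fan_rays A. \<not> \<rho> \<subseteq> \<sigma>}. x \<rho>) = 0}"

inductive_set polyfun :: "'a set \<Rightarrow> (('a \<Rightarrow> complex) \<Rightarrow> complex) set" for A where
  pconst: "(\<lambda>y. c) \<in> polyfun A"
| pvar: "a \<in> A \<Longrightarrow> (\<lambda>y. y a) \<in> polyfun A"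
| padd: "p \<in> polyfun A \<Longrightarrow> q \<in> polyfun A \<Longrightarrow> (\<lambda>y. p y + q y) \<in> polyfun A"
| pmult: "p \<in> polyfun A \<Longrightarrow> q \<in> polyfun A \<Longrightarrow> (\<lambda>y. p y * q y) \<in> polyfun A"

text \<open>Points of C^A are functions vanishing outside A. Zariski closure in C^A.\<close>
definition zariski_closure :: "'a set \<Rightarrow> ('a \<Rightarrow> complex) set \<Rightarrow> ('a \<Rightarrow> complex) set" where
  "zariski_closure A S = {y. (\<forall>a. a \<notin> A \<longrightarrow> y a = 0) \<and>
     (\<forall>p\<in>polyfun A. (\<forall>s\<in>S. p s = 0) \<longrightarrow> p y = 0)}"

definition lmono :: "complex^'n \<Rightarrow> int^'n \<Rightarrow> complex" where
  "lmono t a = (\<Prod>i\<in>UNIV. (t $ i) powi (a $ i))"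

definition Y_hat :: "(int^'n) set \<Rightarrow> (int^'n \<Rightarrow> complex) set" where
  "Y_hat A = zariski_closure A
     {y. \<exists>u t. u \<noteq> 0 \<and> (\<forall>i. t $ i \<noteq> 0) \<and> y = (\<lambda>a. if a \<in> A then u * lmono t a else 0)}"

definition strictly_A_copositive :: "(int^'n) set \<Rightarrow> (int^'n \<Rightarrow> real) \<Rightarrow> bool" where
  "strictly_A_copositive A c \<longleftrightarrow>
     (\<forall>y\<in>Y_hat A. (\<forall>a\<in>A. Im (y a) = 0 \<and> Re (y a) \<ge> 0) \<and> (\<exists>a\<in>A. y a \<noteq> 0)
        \<longrightarrow> (\<Sum>a\<in>A. c a * Re (y a)) > 0)"

end

theory Submission
  imports Defs
begin

text \<open>
  The Cox monomial map \<open>x \<mapsto> (x\<^bsup>F\<^sup>T a + b\<^esup>)\<^sub>a\<close> sends the nonnegative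
  orthant into the real nonnegative part of \<open>Y_hat A\<close>: points with positive coordinates land on
  the torus orbit, and the others are limits of such points. Along this map \<open>f_cox\<close> is the pullback
  of the linear form \<open>y \<mapsto> \<Sum>\<^sub>a c\<^sub>a y\<^sub>a\<close>, and the image point vanishes exactly on \<open>Z_A\<close>, because
  the maximal cones of the normal fan are the normal cones of the vertices.

  Conversely every nonzero nonnegative real point \<open>y\<close> of \<open>Y_hat A\<close> is in the image. Rational
  affine relations among lattice points become binomial relations valid on \<open>Y_hat A\<close>; they show
  that on the support \<open>S\<close> of \<open>y\<close> the function \<open>ln y\<close> is affine, hence a combination
  \<open>\<Sum>\<^sub>\<rho> z\<^sub>\<rho> (F\<^sub>\<rho> \<bullet> a + b\<^sub>\<rho>)\<close> of facet slacks, and that \<open>S\<close> contains every point of \<open>A\<close> on the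
  smallest face of \<open>conv(A)\<close> containing \<open>S\<close>. A preimage is \<open>x\<^sub>\<rho> = exp z\<^sub>\<rho>\<close> on the rays not
  vanishing on \<open>S\<close> and \<open>x\<^sub>\<rho> = 0\<close> on the others. So strict copositivity, positivity of the linear
  form on the nonzero part of the image, says exactly that \<open>f_cox \<ge> 0\<close> with zero set \<open>Z_A\<close>.
\<close>


section \<open>Rational linear algebra\<close>

lemma linear_system_eliminate:
  fixes m :: "'j \<Rightarrow> 'i \<Rightarrow> 'a::field"
  assumes "finite I" "i0 \<notin> I" "j0 \<in> J" "m j0 i0 \<noteq> 0"
  shows "(\<forall>j\<in>J. (\<Sum>i\<in>insert i0 I. m j i * \<nu> i) = r j) \<longleftrightarrow>
    \<nu> i0 = (r j0 - (\<Sum>i\<in>I. m j0 i * \<nu> i)) / m j0 i0 \<and>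
    (\<forall>j\<in>J. (\<Sum>i\<in>I. (m j i - m j i0 * m j0 i / m j0 i0) * \<nu> i) = r j - m j i0 * r j0 / m j0 i0)"
proof -
  define c where "c = m j0 i0"
  define s where "s j = (\<Sum>i\<in>I. m j i * \<nu> i)" for j
  have c: "c \<noteq> 0" using assms(4) by (simp add: c_def)
  have ins: "(\<Sum>i\<in>insert i0 I. m j i * \<nu> i) = m j i0 * \<nu> i0 + s j" for j
    using assms(1,2) by (simp add: s_def)
  have reduced: "(\<Sum>i\<in>I. (m j i - m j i0 * m j0 i / c) * \<nu> i) = s j - m j i0 / c * s j0" for j
    by (simp add: s_def algebra_simps sum_subtractf sum_distrib_left)
  have row_j0: "m j0 i0 * \<nu> i0 + s j0 = r j0 \<longleftrightarrow> \<nu> i0 = (r j0 - s j0) / c"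
  proof -
    have "\<nu> i0 = (r j0 - s j0) / c \<longleftrightarrow> c * \<nu> i0 = r j0 - s j0"
      using c by (simp add: eq_divide_eq mult.commute)
    moreover have "m j0 i0 * \<nu> i0 + s j0 = r j0 \<longleftrightarrow> c * \<nu> i0 = r j0 - s j0"
      by (simp add: c_def eq_diff_eq)
    ultimately show ?thesis by blast
  qed
  have row_j: "m j i0 * \<nu> i0 + s j = r j \<longleftrightarrow> s j - m j i0 / c * s j0 = r j - m j i0 * r j0 / c"
    if "\<nu> i0 = (r j0 - s j0) / c" for j
  proof -
    have r0: "r j0 = s j0 + c * \<nu> i0" using c that by (simp add: field_simps)
    have "m j i0 * \<nu> i0 + s j - r j = (s j - m j i0 / c * s j0) - (r j - m j i0 * r j0 / c)"
      using c by (simp add: r0 field_simps)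
    then show ?thesis by (rule diff_eq_diff_eq)
  qed
  have "(\<forall>j\<in>J. m j i0 * \<nu> i0 + s j = r j) \<longleftrightarrow>
      \<nu> i0 = (r j0 - s j0) / c \<and> (\<forall>j\<in>J. s j - m j i0 / c * s j0 = r j - m j i0 * r j0 / c)"
    using row_j0 row_j assms(3) by blast
  then show ?thesis
    unfolding ins reduced[symmetric] by (simp only: s_def c_def)
qed

lemma unique_solution_column_nonzero:
  fixes m :: "'j \<Rightarrow> 'i \<Rightarrow> 'a::ring_1"
  assumes "finite I" "i0 \<in> I"
    and "\<forall>j\<in>J. (\<Sum>i\<in>I. m j i * \<mu> i) = r j"
    and "\<forall>\<nu>. (\<forall>j\<in>J. (\<Sum>i\<in>I. m j i * \<nu> i) = r j) \<longrightarrow> (\<forall>i\<in>I. \<nu> i = \<mu> i)"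
  shows "\<exists>j\<in>J. m j i0 \<noteq> 0"
proof (rule ccontr)
  assume "\<not> (\<exists>j\<in>J. m j i0 \<noteq> 0)"
  then have "(\<Sum>i\<in>I. m j i * (\<mu>(i0 := \<mu> i0 + 1)) i) = (\<Sum>i\<in>I. m j i * \<mu> i)" if "j \<in> J" for j
    using that by (intro sum.cong) auto
  then have "\<forall>j\<in>J. (\<Sum>i\<in>I. m j i * (\<mu>(i0 := \<mu> i0 + 1)) i) = r j" using assms(3) by simp
  then show False using assms(2,4) by fastforce
qed

lemma unique_solution_rational:
  fixes m :: "'j \<Rightarrow> 'i \<Rightarrow> 'a::field_char_0"
  assumes "finite I"
    and "\<forall>j\<in>J. \<forall>i\<in>I. m j i \<in> \<rat>" and "\<forall>j\<in>J. r j \<in> \<rat>"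
    and "\<forall>j\<in>J. (\<Sum>i\<in>I. m j i * \<mu> i) = r j"
    and "\<forall>\<nu>. (\<forall>j\<in>J. (\<Sum>i\<in>I. m j i * \<nu> i) = r j) \<longrightarrow> (\<forall>i\<in>I. \<nu> i = \<mu> i)"
  shows "\<forall>i\<in>I. \<mu> i \<in> \<rat>"
  using assms
proof (induction I arbitrary: m r rule: finite_induct)
  case empty
  then show ?case by simp
next
  case (insert i0 I)
  obtain j0 where j0: "j0 \<in> J" "m j0 i0 \<noteq> 0"
    using unique_solution_column_nonzero[OF _ insertI1 insert.prems(3,4)] insert.hyps(1) by blast
  note elim = linear_system_eliminate[where m = m, OF insert.hyps j0]
  define m' where "m' j i = m j i - m j i0 * m j0 i / m j0 i0" for j i
  define r' where "r' j = r j - m j i0 * r j0 / m j0 i0" for j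
  have reduced_sol: "\<forall>j\<in>J. (\<Sum>i\<in>I. m' j i * \<mu> i) = r' j"
    using elim[of \<mu> r] insert.prems(3) by (simp add: m'_def r'_def)
  have reduced_unique: "\<forall>i\<in>I. \<nu> i = \<mu> i" if "\<forall>j\<in>J. (\<Sum>i\<in>I. m' j i * \<nu> i) = r' j" for \<nu>
  proof -
    define \<nu>' where "\<nu>' = \<nu>(i0 := (r j0 - (\<Sum>i\<in>I. m j0 i * \<nu> i)) / m j0 i0)"
    have "(\<Sum>i\<in>I. f i * \<nu>' i) = (\<Sum>i\<in>I. f i * \<nu> i)" for f
      using insert.hyps by (intro sum.cong) (auto simp: \<nu>'_def)
    then have "\<forall>j\<in>J. (\<Sum>i\<in>insert i0 I. m j i * \<nu>' i) = r j"
      using elim[of \<nu>' r] that by (simp add: m'_def r'_def \<nu>'_def)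
    then have "\<forall>i\<in>insert i0 I. \<nu>' i = \<mu> i" using insert.prems(4) by blast
    then show ?thesis using insert.hyps(2) by (auto simp: \<nu>'_def split: if_splits)
  qed
  have "\<forall>i\<in>I. \<mu> i \<in> \<rat>"
  proof (rule insert.IH[of m' r'])
    show "\<forall>j\<in>J. \<forall>i\<in>I. m' j i \<in> \<rat>" "\<forall>j\<in>J. r' j \<in> \<rat>"
      unfolding m'_def r'_def using insert.prems(1,2) j0(1)
      by (auto intro!: Rats_diff Rats_divide Rats_mult)
  qed (use reduced_sol reduced_unique in blast)+
  moreover have "(r j0 - (\<Sum>i\<in>I. m j0 i * \<mu> i)) / m j0 i0 \<in> \<rat>"
    using calculation insert.prems(1,2) j0(1) by (intro Rats_divide Rats_diff Rats_sum Rats_mult) auto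
  moreover have "\<mu> i0 = (r j0 - (\<Sum>i\<in>I. m j0 i * \<mu> i)) / m j0 i0"
    using elim[of \<mu> r] insert.prems(3) by blast
  ultimately show ?case by simp
qed

lemma Rats_common_denominator:
  fixes f :: "'a \<Rightarrow> real"
  assumes "finite A" "\<forall>a\<in>A. f a \<in> \<rat>"
  obtains D :: nat and g :: "'a \<Rightarrow> int" where "D > 0" "\<forall>a\<in>A. of_int (g a) = real D * f a"
proof -
  have "\<exists>D::nat. D > 0 \<and> (\<forall>a\<in>A. real D * f a \<in> \<int>)"
    using assms
  proof (induction A rule: finite_induct)
    case empty
    show ?case by (intro exI[of _ 1]) auto
  next
    case (insert x A)
    then obtain D :: nat where D: "D > 0" "\<forall>a\<in>A. real D * f a \<in> \<int>" by auto
    obtain p q where pq: "q > 0" "f x = of_int p / of_int q"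
      using insert.prems by (auto elim: Rats_cases')
    have "real (D * nat q) * f a \<in> \<int>" if "a \<in> insert x A" for a
    proof (cases "a = x")
      case True
      then show ?thesis using pq by (simp add: Ints_mult)
    next
      case False
      have eq: "real (D * nat q) * f a = of_int q * (real D * f a)" using pq(1) by simp
      have "real D * f a \<in> \<int>" using D(2) False that by auto
      then have "of_int q * (real D * f a) \<in> \<int>" by (rule Ints_mult[OF Ints_of_int])
      then show ?thesis by (simp only: eq)
    qed
    then show ?case using D(1) pq(1) by (intro exI[of _ "D * nat q"]) simp
  qed
  then obtain D :: nat where "D > 0" "\<forall>a\<in>A. real D * f a \<in> \<int>" by blast
  then show ?thesis
    using that[of D "\<lambda>a. \<lfloor>real D * f a\<rfloor>"] by (simp add: Ints_def)
qed

lemma realv_inner: "realv v \<bullet> realv a = of_int (idot v a)"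
  by (simp add: realv_def idot_def inner_vec_def)

lemma realv_eq_0_iff: "realv v = 0 \<longleftrightarrow> v = 0"
  by (simp add: realv_def vec_eq_iff)

lemma inj_realv: "inj realv"
  by (auto simp: inj_def realv_def vec_eq_iff)

lemma realv_Rats: "realv a $ i \<in> \<rat>"
  by (simp add: realv_def)

lemma affine_independent_rational_coords:
  fixes T :: "(real^'n) set"
  assumes "finite T" "\<not> affine_dependent T"
    and "\<forall>v\<in>T. \<forall>i. v $ i \<in> \<rat>" and "\<forall>i. q $ i \<in> \<rat>"
    and "sum u T = 1" and "(\<Sum>v\<in>T. u v *\<^sub>R v) = q"
  shows "\<forall>v\<in>T. u v \<in> \<rat>"
proof -
  \<comment> \<open>the barycentric coordinates solve a rational linear system with rows indexed by
    \<open>None\<close> (the sum of the coordinates) and \<open>Some i\<close> (the \<open>i\<close>-th coordinate of the point)\<close>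
  define m :: "'n option \<Rightarrow> real^'n \<Rightarrow> real" where
    "m j v = (case j of None \<Rightarrow> 1 | Some i \<Rightarrow> v $ i)" for j v
  define r :: "'n option \<Rightarrow> real" where
    "r j = (case j of None \<Rightarrow> 1 | Some i \<Rightarrow> q $ i)" for j
  have system_iff: "(\<forall>j\<in>UNIV. (\<Sum>v\<in>T. m j v * \<nu> v) = r j) \<longleftrightarrow>
      sum \<nu> T = 1 \<and> (\<Sum>v\<in>T. \<nu> v *\<^sub>R v) = q" for \<nu>
    by (auto simp: m_def r_def vec_eq_iff mult.commute split: option.split)
  have unique: "\<nu> v = u v" if "v \<in> T" "sum \<nu> T = 1" "(\<Sum>v\<in>T. \<nu> v *\<^sub>R v) = q" for \<nu> v
  proof -
    have "sum (\<lambda>v. \<nu> v - u v) T = 0" "(\<Sum>v\<in>T. (\<nu> v - u v) *\<^sub>R v) = 0"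
      using that assms(5,6) by (simp_all add: sum_subtractf scaleR_diff_left)
    then show ?thesis
      using assms(2) affine_dependent_explicit_finite[OF assms(1)] that(1) by fastforce
  qed
  show ?thesis
  proof (rule unique_solution_rational[of T UNIV m r u])
    show "\<forall>j\<in>UNIV. \<forall>v\<in>T. m j v \<in> \<rat>" "\<forall>j\<in>UNIV. r j \<in> \<rat>"
      using assms(3,4) by (auto simp: m_def r_def split: option.split)
    show "\<forall>j\<in>UNIV. (\<Sum>v\<in>T. m j v * u v) = r j"
      using system_iff assms(5,6) by blast
    show "\<forall>\<nu>. (\<forall>j\<in>UNIV. (\<Sum>v\<in>T. m j v * \<nu> v) = r j) \<longrightarrow> (\<forall>v\<in>T. \<nu> v = u v)"
      using system_iff unique by blast
  qed fact
qed

lemma affine_hull_realv_rational_coords: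
  assumes "finite B" "\<not> affine_dependent (realv ` B)" "realv s \<in> affine hull (realv ` B)"
  obtains \<mu> where "\<forall>c\<in>B. \<mu> c \<in> \<rat>" "sum \<mu> B = 1" "(\<Sum>c\<in>B. \<mu> c *\<^sub>R realv c) = realv s"
proof -
  have inj: "inj_on realv B" using inj_realv by (rule inj_on_subset) simp
  obtain u where u: "sum u (realv ` B) = 1" "(\<Sum>v\<in>realv ` B. u v *\<^sub>R v) = realv s"
    using assms(3) affine_hull_finite[OF finite_imageI[OF assms(1)]] by blast
  have "\<forall>v\<in>realv ` B. u v \<in> \<rat>"
    using affine_independent_rational_coords[OF finite_imageI[OF assms(1)] assms(2) _ _ u]
    by (auto simp: realv_Rats)
  then show ?thesis
    using that[of "\<lambda>c. u (realv c)"] u by (simp add: sum.reindex[OF inj])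
qed

lemma convex_hull_affine_independent_subset:
  fixes S :: "'a::euclidean_space set"
  assumes "finite S" "y \<in> convex hull S"
  shows "\<exists>T\<subseteq>S. \<not> affine_dependent T \<and> y \<in> convex hull T"
  using assms
proof (induction S rule: finite_psubset_induct)
  case (psubset S)
  show ?case
  proof (cases "affine_dependent S")
    case True
    then have "aff_dim S + 1 < card S"
      using aff_dim_le_card[OF psubset.hyps(1)] affine_independent_iff_card[of S] psubset.hyps(1)
      by linarith
    moreover obtain S' where "S' \<subseteq> S" "card S' \<le> aff_dim S + 1" "y \<in> convex hull S'"
      using psubset.prems caratheodory_aff_dim[of S] by blast
    ultimately have "S' \<subset> S" "y \<in> convex hull S'" by auto
    then show ?thesis using psubset.IH by (meson order.trans psubset_imp_subset)
  qed (use psubset.prems in blast)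
qed

lemma convex_hull_realv_rational_coords:
  fixes A :: "(int^'n) set"
  assumes "finite A" "q \<in> convex hull (realv ` A)" "\<forall>i. q $ i \<in> \<rat>"
  obtains \<theta> where "\<forall>c\<in>A. \<theta> c \<in> \<rat> \<and> \<theta> c \<ge> 0" "sum \<theta> A = 1" "(\<Sum>c\<in>A. \<theta> c *\<^sub>R realv c) = q"
proof -
  obtain T where T: "T \<subseteq> realv ` A" "\<not> affine_dependent T" "q \<in> convex hull T"
    using convex_hull_affine_independent_subset[OF finite_imageI[OF assms(1)] assms(2)] by blast
  define B where "B = {c\<in>A. realv c \<in> T}"
  have TB: "T = realv ` B" and "B \<subseteq> A" using T(1) by (auto simp: B_def)
  have "finite B" using assms(1) by (simp add: B_def)
  have "finite T" using TB \<open>finite B\<close> by simp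
  obtain u where u: "\<forall>v\<in>T. 0 \<le> u v" "sum u T = 1" "(\<Sum>v\<in>T. u v *\<^sub>R v) = q"
    using T(3) convex_hull_finite[OF \<open>finite T\<close>] by auto
  have rat: "\<forall>v\<in>T. u v \<in> \<rat>"
    using affine_independent_rational_coords[OF _ T(2) _ assms(3) u(2,3)] TB \<open>finite B\<close>
    by (auto simp: realv_Rats)
  have inj: "inj_on realv B" using inj_realv by (rule inj_on_subset) simp
  have restrict: "(\<Sum>c\<in>A. if c \<in> B then g c else 0) = sum g B" for g :: "int^'n \<Rightarrow> 'z::comm_monoid_add"
    using \<open>B \<subseteq> A\<close> assms(1) by (simp add: sum.inter_restrict[symmetric] Int_absorb1)
  define \<theta> where "\<theta> c = (if c \<in> B then u (realv c) else 0)" for c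
  have "\<forall>c\<in>A. \<theta> c \<in> \<rat> \<and> \<theta> c \<ge> 0" using rat u(1) TB by (auto simp: \<theta>_def)
  moreover have "sum \<theta> A = 1"
    using u(2) by (simp add: \<theta>_def restrict TB sum.reindex[OF inj])
  moreover have "\<theta> c *\<^sub>R realv c = (if c \<in> B then u (realv c) *\<^sub>R realv c else 0)" for c
    by (simp add: \<theta>_def)
  then have "(\<Sum>c\<in>A. \<theta> c *\<^sub>R realv c) = q"
    using u(3) by (simp add: restrict TB sum.reindex[OF inj])
  ultimately show ?thesis using that by blast
qed

lemma affine_independent_interpolation:
  fixes B :: "'a::euclidean_space set" and f :: "'a \<Rightarrow> real"
  assumes "\<not> affine_dependent B"
  obtains w w0 where "\<forall>v\<in>B. f v = w \<bullet> v + w0"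
proof (cases "B = {}")
  case False
  then obtain b0 where "b0 \<in> B" by blast
  then have indep: "independent ((\<lambda>x. - b0 + x) ` (B - {b0}))"
    using assms affine_dependent_iff_dependent2 by blast
  obtain g :: "'a \<Rightarrow> real" where g: "linear g"
    "\<forall>x\<in>(\<lambda>x. - b0 + x) ` (B - {b0}). g x = f (b0 + x) - f b0"
    using real_vector.linear_independent_extend[OF indep, of "\<lambda>x. f (b0 + x) - f b0"] by blast
  define w where "w = adjoint g 1"
  have gw: "g x = w \<bullet> x" for x
    using adjoint_works[OF g(1), of x 1] by (simp add: w_def inner_commute)
  have "f v = w \<bullet> v + (f b0 - w \<bullet> b0)" if "v \<in> B" for v
  proof (cases "v = b0")
    case False
    then have "g (- b0 + v) = f v - f b0" using g(2) that by auto
    then have "w \<bullet> v - w \<bullet> b0 = f v - f b0" by (simp add: gw inner_diff_right)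
    then show ?thesis by simp
  qed simp
  then show ?thesis using that by blast
qed (use that in blast)

section \<open>Binomial relations on \<open>Y_hat A\<close>\<close>

lemma polyfun_prod:
  assumes "finite X" "\<forall>x\<in>X. g x \<in> polyfun A"
  shows "(\<lambda>y. \<Prod>x\<in>X. g x y) \<in> polyfun A"
  using assms by (induction X rule: finite_induct) (auto intro: polyfun.intros)

lemma polyfun_power:
  assumes "p \<in> polyfun A"
  shows "(\<lambda>y. p y ^ k) \<in> polyfun A"
  by (induction k) (auto intro: polyfun.intros assms)

lemma polyfun_diff:
  assumes "p \<in> polyfun A" "q \<in> polyfun A"
  shows "(\<lambda>y. p y - q y) \<in> polyfun A"
proof -
  have "(\<lambda>y. p y + (- 1) * q y) \<in> polyfun A"
    by (intro polyfun.intros assms)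
  then show ?thesis by simp
qed

lemma polyfun_tendsto:
  assumes "p \<in> polyfun A" "\<forall>a\<in>A. (\<lambda>k. Y k a) \<longlonglongrightarrow> Z a"
  shows "(\<lambda>k. p (Y k)) \<longlonglongrightarrow> p Z"
  using assms by (induction rule: polyfun.induct) (auto intro: tendsto_add tendsto_mult)

lemma power_int_sum:
  fixes t :: "'a::field"
  assumes "t \<noteq> 0" "finite X"
  shows "(\<Prod>a\<in>X. t powi f a) = t powi (\<Sum>a\<in>X. f a)"
  using assms(2) by (induction X rule: finite_induct) (simp_all add: assms(1) power_int_add)

lemma lmono_prod_power:
  fixes t :: "complex^'n"
  assumes "\<forall>i. t $ i \<noteq> 0" "finite X"
  shows "(\<Prod>a\<in>X. lmono t a ^ k a) = (\<Prod>i\<in>UNIV. t $ i powi (\<Sum>a\<in>X. int (k a) * a $ i))"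
proof -
  have "lmono t a ^ k a = (\<Prod>i\<in>UNIV. t $ i powi (int (k a) * a $ i))" for a
    unfolding lmono_def prod_power_distrib
    by (intro prod.cong refl) (metis mult.commute power_int_mult power_int_of_nat)
  then have "(\<Prod>a\<in>X. lmono t a ^ k a) = (\<Prod>a\<in>X. \<Prod>i\<in>UNIV. t $ i powi (int (k a) * a $ i))"
    by simp
  also have "\<dots> = (\<Prod>i\<in>UNIV. t $ i powi (\<Sum>a\<in>X. int (k a) * a $ i))"
    using assms by (subst prod.swap) (intro prod.cong refl power_int_sum, auto)
  finally show ?thesis .
qed

lemma lmono_exp: "lmono (\<chi> i. complex_of_real (exp (s $ i))) a = complex_of_real (exp (s \<bullet> realv a))"
proof -
  have "lmono (\<chi> i. complex_of_real (exp (s $ i))) a = complex_of_real (\<Prod>i\<in>UNIV. exp (s $ i) powi a $ i)"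
    by (simp add: lmono_def)
  also have "(\<Prod>i\<in>UNIV. exp (s $ i) powi a $ i) = exp (s \<bullet> realv a)"
    by (simp add: exp_power_int realv_def inner_vec_def exp_sum mult.commute)
  finally show ?thesis .
qed

lemma Y_hat_vanishes_outside: "y \<in> Y_hat A \<Longrightarrow> a \<notin> A \<Longrightarrow> y a = 0"
  by (simp add: Y_hat_def zariski_closure_def)

lemma Y_hat_binomial:
  fixes A :: "(int^'n) set" and \<alpha> \<beta> :: "int^'n \<Rightarrow> nat"
  assumes "finite A" "y \<in> Y_hat A"
    and degree: "(\<Sum>a\<in>A. \<alpha> a) = (\<Sum>a\<in>A. \<beta> a)"
    and moment: "(\<Sum>a\<in>A. real (\<alpha> a) *\<^sub>R realv a) = (\<Sum>a\<in>A. real (\<beta> a) *\<^sub>R realv a)"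
  shows "(\<Prod>a\<in>A. y a ^ \<alpha> a) = (\<Prod>a\<in>A. y a ^ \<beta> a)"
proof -
  have moment_int: "(\<Sum>a\<in>A. int (\<alpha> a) * a $ i) = (\<Sum>a\<in>A. int (\<beta> a) * a $ i)" for i
  proof -
    have "real_of_int (\<Sum>a\<in>A. int (\<alpha> a) * a $ i) = real_of_int (\<Sum>a\<in>A. int (\<beta> a) * a $ i)"
      using arg_cong[OF moment, of "\<lambda>v. v $ i"] by (simp add: realv_def)
    then show ?thesis by (simp only: of_int_eq_iff)
  qed
  define p where "p z = (\<Prod>a\<in>A. z a ^ \<alpha> a) - (\<Prod>a\<in>A. z a ^ \<beta> a)" for z :: "int^'n \<Rightarrow> complex"
  have "p \<in> polyfun A"
    unfolding p_def using assms(1)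
    by (intro polyfun_diff polyfun_prod ballI polyfun_power polyfun.pvar) auto
  moreover have "p (\<lambda>a. if a \<in> A then u * lmono t a else 0) = 0"
    if "u \<noteq> 0" "\<forall>i. t $ i \<noteq> 0" for u and t :: "complex^'n"
  proof -
    have "(\<Prod>a\<in>A. (if a \<in> A then u * lmono t a else 0) ^ k a) =
        u ^ (\<Sum>a\<in>A. k a) * (\<Prod>i\<in>UNIV. t $ i powi (\<Sum>a\<in>A. int (k a) * a $ i))" for k
      using lmono_prod_power[OF that(2) assms(1)]
      by (simp add: power_mult_distrib prod.distrib power_sum)
    then show ?thesis by (simp add: p_def degree moment_int)
  qed
  ultimately have "p y = 0"
    using assms(2) unfolding Y_hat_def zariski_closure_def by blast
  then show ?thesis by (simp add: p_def)
qed

lemma ln_prod_power: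
  fixes r :: "'a \<Rightarrow> real"
  assumes "finite A" "\<forall>a\<in>A. k a \<noteq> 0 \<longrightarrow> r a > 0"
  shows "ln (\<Prod>a\<in>A. r a ^ k a) = (\<Sum>a\<in>A. real (k a) * ln (r a))"
proof -
  have nonzero: "r a ^ k a \<noteq> 0" if "a \<in> A" for a
    using assms(2) that by (cases "k a = 0") auto
  have "ln (r a ^ k a) = real (k a) * ln (r a)" if "a \<in> A" for a
    using assms(2) that by (cases "k a = 0") (auto simp: ln_realpow)
  then show ?thesis using ln_prod[OF assms(1) nonzero] by simp
qed

lemma Y_hat_real_binomial:
  fixes A :: "(int^'n) set" and r :: "int^'n \<Rightarrow> real" and \<alpha> \<beta> :: "int^'n \<Rightarrow> nat"
  assumes "finite A" "y \<in> Y_hat A"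
    and y_real: "\<forall>a\<in>A. y a = of_real (r a) \<and> r a \<ge> 0"
    and degree: "(\<Sum>a\<in>A. \<alpha> a) = (\<Sum>a\<in>A. \<beta> a)"
    and moment: "(\<Sum>a\<in>A. real (\<alpha> a) *\<^sub>R realv a) = (\<Sum>a\<in>A. real (\<beta> a) *\<^sub>R realv a)"
    and \<beta>_pos: "\<forall>a\<in>A. \<beta> a \<noteq> 0 \<longrightarrow> r a > 0"
  shows "(\<forall>a\<in>A. \<alpha> a \<noteq> 0 \<longrightarrow> r a > 0) \<and>
    (\<Sum>a\<in>A. real (\<alpha> a) * ln (r a)) = (\<Sum>a\<in>A. real (\<beta> a) * ln (r a))"
proof -
  have "complex_of_real (\<Prod>a\<in>A. r a ^ \<alpha> a) = complex_of_real (\<Prod>a\<in>A. r a ^ \<beta> a)"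
    using Y_hat_binomial[OF assms(1,2) degree moment] y_real by simp
  then have prod_eq: "(\<Prod>a\<in>A. r a ^ \<alpha> a) = (\<Prod>a\<in>A. r a ^ \<beta> a)"
    by (simp only: of_real_eq_iff)
  have "(\<Prod>a\<in>A. r a ^ \<beta> a) > 0"
    using \<beta>_pos by (intro prod_pos) (metis zero_less_power power_0 zero_less_one)
  then have "(\<Prod>a\<in>A. r a ^ \<alpha> a) \<noteq> 0" using prod_eq by simp
  then have \<alpha>_pos: "\<forall>a\<in>A. \<alpha> a \<noteq> 0 \<longrightarrow> r a > 0"
    using assms(1) y_real by (metis power_0_left prod_zero_iff less_eq_real_def)
  then show ?thesis
    using prod_eq ln_prod_power[OF assms(1) \<alpha>_pos] ln_prod_power[OF assms(1) \<beta>_pos] by simp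
qed

lemma Rats_nat_parts:
  fixes \<gamma> :: "'a \<Rightarrow> real"
  assumes "finite A" "\<forall>a\<in>A. \<gamma> a \<in> \<rat>"
  obtains D :: nat and \<alpha> \<beta> :: "'a \<Rightarrow> nat" where "D > 0"
    "\<forall>a\<in>A. real (\<alpha> a) - real (\<beta> a) = real D * \<gamma> a"
    "\<forall>a\<in>A. \<alpha> a \<noteq> 0 \<longleftrightarrow> \<gamma> a > 0" "\<forall>a\<in>A. \<beta> a \<noteq> 0 \<longleftrightarrow> \<gamma> a < 0"
proof -
  obtain D :: nat and g where D: "D > 0" "\<forall>a\<in>A. of_int (g a) = real D * \<gamma> a"
    using Rats_common_denominator[OF assms] by blast
  have "real (nat z) - real (nat (- z)) = of_int z" for z :: int
    by (cases "z \<ge> 0") auto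
  moreover have "g a > 0 \<longleftrightarrow> \<gamma> a > 0" "g a < 0 \<longleftrightarrow> \<gamma> a < 0" if "a \<in> A" for a
  proof -
    have "(g a > 0 \<longleftrightarrow> real D * \<gamma> a > 0) \<and> (g a < 0 \<longleftrightarrow> real D * \<gamma> a < 0)"
      using D(2) that by (metis of_int_less_0_iff of_int_0_less_iff)
    then show "g a > 0 \<longleftrightarrow> \<gamma> a > 0" "g a < 0 \<longleftrightarrow> \<gamma> a < 0"
      using D(1) by (simp_all add: mult_less_0_iff zero_less_mult_iff)
  qed
  ultimately show ?thesis
    using that[of D "\<lambda>a. nat (g a)" "\<lambda>a. nat (- g a)"] D by (auto simp: not_le)
qed

lemma Y_hat_rational_relation:
  fixes A :: "(int^'n) set" and r \<gamma> :: "int^'n \<Rightarrow> real"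
  assumes "finite A" "y \<in> Y_hat A"
    and y_real: "\<forall>a\<in>A. y a = of_real (r a) \<and> r a \<ge> 0"
    and "\<forall>a\<in>A. \<gamma> a \<in> \<rat>"
    and degree: "sum \<gamma> A = 0" and moment: "(\<Sum>a\<in>A. \<gamma> a *\<^sub>R realv a) = 0"
    and neg_pos: "\<forall>a\<in>A. \<gamma> a < 0 \<longrightarrow> r a > 0"
  shows "(\<forall>a\<in>A. \<gamma> a > 0 \<longrightarrow> r a > 0) \<and> (\<Sum>a\<in>A. \<gamma> a * ln (r a)) = 0"
proof -
  obtain D :: nat and \<alpha> \<beta> where D: "D > 0"
    and \<alpha>\<beta>: "\<forall>a\<in>A. real (\<alpha> a) - real (\<beta> a) = real D * \<gamma> a"
    and \<alpha>: "\<forall>a\<in>A. \<alpha> a \<noteq> 0 \<longleftrightarrow> \<gamma> a > 0" and \<beta>: "\<forall>a\<in>A. \<beta> a \<noteq> 0 \<longleftrightarrow> \<gamma> a < 0"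
    using Rats_nat_parts[OF assms(1,4)] by blast
  have "real (\<Sum>a\<in>A. \<alpha> a) - real (\<Sum>a\<in>A. \<beta> a) = real D * sum \<gamma> A"
    using \<alpha>\<beta> by (simp add: sum_distrib_left flip: sum_subtractf)
  then have "real (\<Sum>a\<in>A. \<alpha> a) = real (\<Sum>a\<in>A. \<beta> a)"
    using degree by simp
  then have degree': "(\<Sum>a\<in>A. \<alpha> a) = (\<Sum>a\<in>A. \<beta> a)"
    by (simp only: of_nat_eq_iff)
  have "(\<Sum>a\<in>A. real (\<alpha> a) *\<^sub>R realv a) - (\<Sum>a\<in>A. real (\<beta> a) *\<^sub>R realv a) =
      real D *\<^sub>R (\<Sum>a\<in>A. \<gamma> a *\<^sub>R realv a)"
    using \<alpha>\<beta> by (simp add: scaleR_sum_right flip: sum_subtractf scaleR_diff_left)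
  then have moment': "(\<Sum>a\<in>A. real (\<alpha> a) *\<^sub>R realv a) = (\<Sum>a\<in>A. real (\<beta> a) *\<^sub>R realv a)"
    using moment by simp
  have "\<forall>a\<in>A. \<beta> a \<noteq> 0 \<longrightarrow> r a > 0" using \<beta> neg_pos by blast
  then have "\<forall>a\<in>A. \<alpha> a \<noteq> 0 \<longrightarrow> r a > 0"
    and logs: "(\<Sum>a\<in>A. real (\<alpha> a) * ln (r a)) = (\<Sum>a\<in>A. real (\<beta> a) * ln (r a))"
    using Y_hat_real_binomial[OF assms(1,2) y_real degree' moment'] by blast+
  then have "\<forall>a\<in>A. \<gamma> a > 0 \<longrightarrow> r a > 0" using \<alpha> by blast
  moreover have "real D * (\<Sum>a\<in>A. \<gamma> a * ln (r a)) =
      (\<Sum>a\<in>A. real (\<alpha> a) * ln (r a)) - (\<Sum>a\<in>A. real (\<beta> a) * ln (r a))"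
    using \<alpha>\<beta> by (simp add: sum_distrib_left mult.assoc flip: left_diff_distrib sum_subtractf)
  ultimately show ?thesis using D logs by simp
qed

lemma ln_affine_on_affine_hull:
  fixes A :: "(int^'n) set"
  assumes "finite A" "y \<in> Y_hat A" and y_real: "\<forall>a\<in>A. y a = of_real (r a) \<and> r a \<ge> 0"
    and "B \<subseteq> A" "\<not> affine_dependent (realv ` B)" "\<forall>c\<in>B. r c > 0"
    and "s \<in> A" "realv s \<in> affine hull (realv ` B)"
    and interpolates: "\<forall>c\<in>B. ln (r c) = w \<bullet> realv c + w0"
  shows "ln (r s) = w \<bullet> realv s + w0"
proof -
  have "finite B" using assms(1,4) finite_subset by blast
  obtain \<mu> where \<mu>: "\<forall>c\<in>B. \<mu> c \<in> \<rat>" "sum \<mu> B = 1" "(\<Sum>c\<in>B. \<mu> c *\<^sub>R realv c) = realv s"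
    using affine_hull_realv_rational_coords[OF \<open>finite B\<close> assms(5,8)] by blast
  define \<gamma> where "\<gamma> c = (if c = s then 1 else 0) - (if c \<in> B then \<mu> c else 0)" for c
  have sum_\<gamma>: "(\<Sum>c\<in>A. \<gamma> c *\<^sub>R f c) = f s - (\<Sum>c\<in>B. \<mu> c *\<^sub>R f c)"
    for f :: "int^'n \<Rightarrow> 'z::real_vector"
  proof -
    have "(\<Sum>c\<in>A. \<gamma> c *\<^sub>R f c) =
        (\<Sum>c\<in>A. if c = s then f c else 0) - (\<Sum>c\<in>A. if c \<in> B then \<mu> c *\<^sub>R f c else 0)"
      unfolding sum_subtractf[symmetric] by (intro sum.cong) (auto simp: \<gamma>_def scaleR_diff_left)
    then show ?thesis
      using assms(1,4,7) by (simp add: sum.inter_restrict[symmetric] Int_absorb1)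
  qed
  \<comment> \<open>the barycentric coordinates of \<open>realv s\<close> are rational, so they give a binomial relation\<close>
  have "(\<Sum>c\<in>A. \<gamma> c * ln (r c)) = 0"
  proof (rule Y_hat_rational_relation[OF assms(1,2) y_real, THEN conjunct2])
    show "\<forall>c\<in>A. \<gamma> c \<in> \<rat>" using \<mu>(1) by (simp add: \<gamma>_def)
    show "sum \<gamma> A = 0" using sum_\<gamma>[of "\<lambda>_. 1::real"] \<mu>(2) by simp
    show "(\<Sum>c\<in>A. \<gamma> c *\<^sub>R realv c) = 0" using sum_\<gamma>[of realv] \<mu>(3) by simp
    show "\<forall>c\<in>A. \<gamma> c < 0 \<longrightarrow> r c > 0"
      using assms(6) by (auto simp: \<gamma>_def split: if_splits)
  qed
  then have "ln (r s) = (\<Sum>c\<in>B. \<mu> c * ln (r c))" using sum_\<gamma>[of "\<lambda>c. ln (r c)"] by simp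
  also have "\<dots> = w \<bullet> (\<Sum>c\<in>B. \<mu> c *\<^sub>R realv c) + w0 * sum \<mu> B"
    using interpolates by (simp add: distrib_left sum.distrib inner_sum_right sum_distrib_left mult.commute)
  also have "\<dots> = w \<bullet> realv s + w0"
    using \<mu>(2,3) by simp
  finally show ?thesis .
qed

definition nonneg_Y_hat :: "(int^'n) set \<Rightarrow> (int^'n \<Rightarrow> complex) set" where
  "nonneg_Y_hat A = {y\<in>Y_hat A. \<forall>a\<in>A. Im (y a) = 0 \<and> Re (y a) \<ge> 0}"

lemma strictly_A_copositive_iff:
  "strictly_A_copositive A c \<longleftrightarrow>
    (\<forall>y\<in>nonneg_Y_hat A. y \<noteq> (\<lambda>_. 0) \<longrightarrow> (\<Sum>a\<in>A. c a * Re (y a)) > 0)"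
proof -
  have "(\<exists>a\<in>A. y a \<noteq> 0) \<longleftrightarrow> y \<noteq> (\<lambda>_. 0)" if "y \<in> Y_hat A" for y
    using Y_hat_vanishes_outside[OF that] by (auto simp: fun_eq_iff)
  then show ?thesis
    unfolding strictly_A_copositive_def nonneg_Y_hat_def by blast
qed

lemma pos_on_image_iff:
  fixes L :: "'y \<Rightarrow> real"
  assumes "\<phi> ` X \<subseteq> Y" "Y - {y0} \<subseteq> \<phi> ` X" "L y0 = 0" "\<forall>x\<in>X. f x = L (\<phi> x)"
  shows "(\<forall>y\<in>Y. y \<noteq> y0 \<longrightarrow> L y > 0) \<longleftrightarrow>
    (\<forall>x\<in>X. f x \<ge> 0) \<and> {x\<in>X. f x = 0} = {x\<in>X. \<phi> x = y0}"
proof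
  assume "\<forall>y\<in>Y. y \<noteq> y0 \<longrightarrow> L y > 0"
  then have "\<phi> x \<noteq> y0 \<Longrightarrow> f x > 0" "\<phi> x = y0 \<Longrightarrow> f x = 0" if "x \<in> X" for x
    using assms(1,3,4) that by auto
  then have "f x \<ge> 0" "f x = 0 \<longleftrightarrow> \<phi> x = y0" if "x \<in> X" for x
    using that by (cases "\<phi> x = y0"; force)+
  then show "(\<forall>x\<in>X. f x \<ge> 0) \<and> {x\<in>X. f x = 0} = {x\<in>X. \<phi> x = y0}"
    by auto
next
  assume f: "(\<forall>x\<in>X. f x \<ge> 0) \<and> {x\<in>X. f x = 0} = {x\<in>X. \<phi> x = y0}"
  show "\<forall>y\<in>Y. y \<noteq> y0 \<longrightarrow> L y > 0"
  proof (intro ballI impI)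
    fix y assume "y \<in> Y" "y \<noteq> y0"
    then obtain x where "x \<in> X" "y = \<phi> x" using assms(2) by blast
    then show "L y > 0" using f \<open>y \<noteq> y0\<close> assms(4) by (force simp: less_le)
  qed
qed

section \<open>The polytope and its normal fan\<close>

lemma inner_normal_cone_if_min_at_rel_interior:
  fixes G P :: "(real^'n) set"
  assumes y0: "y0 \<in> rel_interior G" and "G \<subseteq> P"
    and min: "\<forall>x\<in>P. u \<bullet> y0 \<le> u \<bullet> x"
  shows "u \<in> inner_normal_cone P G"
proof -
  have below: "u \<bullet> y \<le> u \<bullet> y0" if y: "y \<in> G" "y \<noteq> y0" for y
  proof -
    \<comment> \<open>extend the segment from \<open>y\<close> through \<open>y0\<close> a little beyond \<open>y0\<close> inside \<open>G\<close>\<close>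
    obtain e where e: "e > 0" "cball y0 e \<inter> affine hull G \<subseteq> G"
      using y0 by (auto simp: mem_rel_interior_cball)
    define d where "d = y0 - y"
    define \<delta> where "\<delta> = e / norm d"
    have "norm d > 0" "\<delta> > 0" using y(2) e(1) by (simp_all add: d_def \<delta>_def)
    have "y0 + \<delta> *\<^sub>R d = (1 + \<delta>) *\<^sub>R y0 + (- \<delta>) *\<^sub>R y"
      by (simp add: d_def algebra_simps)
    also have "\<dots> \<in> affine hull G"
      using y0 rel_interior_subset y(1)
      by (intro mem_affine[OF affine_affine_hull]) (auto intro: hull_inc)
    finally have "y0 + \<delta> *\<^sub>R d \<in> G"
      using e \<open>norm d > 0\<close> by (intro subsetD[OF e(2)]) (simp add: dist_norm \<delta>_def)
    then have "u \<bullet> y0 \<le> u \<bullet> (y0 + \<delta> *\<^sub>R d)" using min assms(2) by blast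
    then have "0 \<le> u \<bullet> d"
      using \<open>\<delta> > 0\<close> by (simp add: inner_add_right zero_le_mult_iff)
    then show ?thesis by (simp add: d_def inner_diff_right)
  qed
  have "u \<bullet> y \<le> u \<bullet> x" if "y \<in> G" "x \<in> P" for y x
    using below[of y] min that by (cases "y = y0") (auto intro: order.trans)
  then show ?thesis by (simp add: inner_normal_cone_def)
qed

lemma inner_normal_cone_scaleR:
  "u \<in> inner_normal_cone Q G \<Longrightarrow> t \<ge> 0 \<Longrightarrow> t *\<^sub>R u \<in> inner_normal_cone Q G"
  by (auto simp: inner_normal_cone_def intro: mult_left_mono)

lemma inner_normal_cone_antimono: "w \<in> G \<Longrightarrow> inner_normal_cone Q G \<subseteq> inner_normal_cone Q {w}"
  by (auto simp: inner_normal_cone_def)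

lemma bounded_halfline_eq_0:
  fixes d :: "'a::real_normed_vector"
  assumes "bounded S" "\<forall>t\<ge>0. x + t *\<^sub>R d \<in> S"
  shows "d = 0"
proof (rule ccontr)
  assume "d \<noteq> 0"
  obtain B where B: "\<forall>y\<in>S. norm y \<le> B" using assms(1) by (auto simp: bounded_iff)
  define t where "t = (B + norm x + 1) / norm d"
  have "norm x \<le> B" using B assms(2)[rule_format, of 0] by simp
  then have "B + norm x + 1 \<ge> 0" using norm_ge_zero[of x] by linarith
  then have "t \<ge> 0" "norm (t *\<^sub>R d) = B + norm x + 1"
    using \<open>d \<noteq> 0\<close> by (simp_all add: t_def)
  moreover have "norm (t *\<^sub>R d) \<le> norm (x + t *\<^sub>R d) + norm x"
    using norm_triangle_ineq4[of "x + t *\<^sub>R d" x] by simp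
  ultimately show False using B assms(2) by force
qed

locale cox_setup =
  fixes A :: "(int^'n) set" and F :: "(real^'n) set \<Rightarrow> int^'n" and b :: "(real^'n) set \<Rightarrow> int"
  assumes finite_A: "finite A"
    and aff_dim_convA: "aff_dim (convA A) = int CARD('n)"
    and prim_gen_F: "\<forall>\<rho>\<in>fan_rays A. prim_gen \<rho> (F \<rho>)"
    and convA_eq: "convA A = {p. \<forall>\<rho>\<in>fan_rays A.
      (\<Sum>i\<in>UNIV. of_int (F \<rho> $ i) * p $ i) + of_int (b \<rho>) \<ge> (0::real)}"
begin

abbreviation "P \<equiv> convA A"

abbreviation "R \<equiv> fan_rays A"

definition ray_gen :: "(real^'n) set \<Rightarrow> real^'n" where
  "ray_gen \<rho> = realv (F \<rho>)"

definition slack :: "(real^'n) set \<Rightarrow> real^'n \<Rightarrow> real" where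
  "slack \<rho> p = ray_gen \<rho> \<bullet> p + of_int (b \<rho>)"

lemma mem_P_iff: "p \<in> P \<longleftrightarrow> (\<forall>\<rho>\<in>R. slack \<rho> p \<ge> 0)"
  by (subst convA_eq) (simp add: slack_def ray_gen_def realv_def inner_vec_def)

lemma slack_realv: "slack \<rho> (realv a) = of_int (idot (F \<rho>) a + b \<rho>)"
  by (simp add: slack_def ray_gen_def realv_inner)

lemma realv_mem_P: "a \<in> A \<Longrightarrow> realv a \<in> P"
  by (simp add: convA_def hull_inc)

lemma cox_exponent_nonneg: "a \<in> A \<Longrightarrow> \<rho> \<in> R \<Longrightarrow> 0 \<le> idot (F \<rho>) a + b \<rho>"
  using realv_mem_P[of a] mem_P_iff slack_realv by fastforce

lemma polytope_P: "polytope P"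
  unfolding convA_def polytope_def using finite_A by blast

lemma compact_P: "compact P"
  by (simp add: polytope_P polytope_imp_compact)

lemma convex_P: "convex P"
  by (simp add: convA_def)

lemma P_nonempty: "P \<noteq> {}"
  using aff_dim_convA by auto

lemma finite_rays: "finite R"
proof -
  have "normal_fan A \<subseteq> inner_normal_cone P ` {G. G face_of P}"
    by (auto simp: normal_fan_def)
  then have "finite (normal_fan A)"
    using finite_polytope_faces[OF polytope_P] finite_surj by blast
  then show ?thesis unfolding fan_rays_def by simp
qed

lemma ray_gen_nonzero: "\<rho> \<in> R \<Longrightarrow> ray_gen \<rho> \<noteq> 0"
  using prim_gen_F by (auto simp: prim_gen_def ray_gen_def realv_eq_0_iff)

lemma ray_gen_mem: "\<rho> \<in> R \<Longrightarrow> ray_gen \<rho> \<in> \<rho>"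
  using prim_gen_F by (auto simp: prim_gen_def ray_gen_def)

lemma ray_normal_cone:
  assumes "\<rho> \<in> R"
  obtains G where "G face_of P" "G \<noteq> {}" "\<rho> = inner_normal_cone P G"
  using assms by (auto simp: fan_rays_def normal_fan_def)

text \<open>Since \<open>P\<close> is full-dimensional, no nonzero functional is constant on it.\<close>

lemma inner_normal_cone_pointed:
  assumes "G \<noteq> {}" "u \<in> inner_normal_cone P G" "- u \<in> inner_normal_cone P G"
  shows "u = 0"
proof (rule ccontr)
  assume "u \<noteq> 0"
  obtain y0 where "y0 \<in> G" using assms(1) by blast
  then have "P \<subseteq> {x. u \<bullet> x = u \<bullet> y0}"
    using assms(2,3) by (force simp: inner_normal_cone_def)
  then have "aff_dim P \<le> aff_dim {x. u \<bullet> x = u \<bullet> y0}" by (rule aff_dim_subset)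
  then show False using \<open>u \<noteq> 0\<close> aff_dim_convA by simp
qed

lemma ray_eq_halfline:
  assumes "\<rho> \<in> R"
  shows "\<rho> = {t *\<^sub>R ray_gen \<rho> | t. t \<ge> 0}"
proof
  obtain G where G: "G face_of P" "G \<noteq> {}" "\<rho> = inner_normal_cone P G"
    using ray_normal_cone assms by blast
  have gen: "ray_gen \<rho> \<in> \<rho>" "ray_gen \<rho> \<noteq> 0"
    using assms ray_gen_mem ray_gen_nonzero by auto
  then show "{t *\<^sub>R ray_gen \<rho> | t. t \<ge> 0} \<subseteq> \<rho>"
    using G(3) inner_normal_cone_scaleR by auto
  show "\<rho> \<subseteq> {t *\<^sub>R ray_gen \<rho> | t. t \<ge> 0}"
  proof
    fix u assume u: "u \<in> \<rho>"
    have "0 \<in> \<rho>" using G(3) by (simp add: inner_normal_cone_def)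
    have "collinear \<rho>" using assms by (simp add: fan_rays_def collinear_aff_dim)
    then obtain w where w: "\<forall>x\<in>\<rho>. \<forall>y\<in>\<rho>. \<exists>c. x - y = c *\<^sub>R w" by (auto simp: collinear_def)
    obtain c0 c1 where "ray_gen \<rho> = c0 *\<^sub>R w" "u = c1 *\<^sub>R w"
      using w gen(1) u \<open>0 \<in> \<rho>\<close> by (metis diff_zero)
    then have "u = (c1 / c0) *\<^sub>R ray_gen \<rho>" using gen(2) by auto
    then obtain t where u_eq: "u = t *\<^sub>R ray_gen \<rho>" by blast
    have "t \<ge> 0"
    proof (rule ccontr)
      assume "\<not> t \<ge> 0"
      then have "- 1 / t \<ge> 0" "(- 1 / t) *\<^sub>R u = - ray_gen \<rho>"
        using u_eq by auto
      then have "- ray_gen \<rho> \<in> inner_normal_cone P G"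
        using G(3) u inner_normal_cone_scaleR by metis
      then show False using inner_normal_cone_pointed G gen by auto
    qed
    then show "u \<in> {t *\<^sub>R ray_gen \<rho> | t. t \<ge> 0}" using u_eq by blast
  qed
qed

lemma ray_eqI:
  assumes "\<rho> \<in> R" "\<rho>' \<in> R" "ray_gen \<rho>' \<in> \<rho>"
  shows "\<rho>' = \<rho>"
proof -
  obtain t where t: "ray_gen \<rho>' = t *\<^sub>R ray_gen \<rho>" "t \<ge> 0"
    using ray_eq_halfline[OF assms(1)] assms(3) by blast
  then have "t > 0" using ray_gen_nonzero[OF assms(2)] by (cases "t = 0") auto
  have "{s *\<^sub>R ray_gen \<rho>' | s. s \<ge> 0} = {s *\<^sub>R ray_gen \<rho> | s. s \<ge> 0}"
  proof (intro set_eqI iffI)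
    fix x assume "x \<in> {s *\<^sub>R ray_gen \<rho>' | s. s \<ge> 0}"
    then obtain s where "s \<ge> 0" "x = (s * t) *\<^sub>R ray_gen \<rho>" using t(1) by auto
    then show "x \<in> {s *\<^sub>R ray_gen \<rho> | s. s \<ge> 0}" using t(2) by auto
  next
    fix x assume "x \<in> {s *\<^sub>R ray_gen \<rho> | s. s \<ge> 0}"
    then obtain s where "s \<ge> 0" "x = (s / t) *\<^sub>R ray_gen \<rho>'" using t(1) \<open>t > 0\<close> by auto
    then show "x \<in> {s *\<^sub>R ray_gen \<rho>' | s. s \<ge> 0}" using \<open>t > 0\<close> by auto
  qed
  then show ?thesis using ray_eq_halfline assms(1,2) by simp
qed

lemma ray_eq_if_tight_at_rel_interior:
  assumes "\<rho> \<in> R" "\<rho>' \<in> R" "G face_of P" "\<rho> = inner_normal_cone P G"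
    and y0: "y0 \<in> rel_interior G" and "slack \<rho>' y0 = 0"
  shows "\<rho>' = \<rho>"
proof -
  have "G \<subseteq> P" using assms(3) face_of_imp_subset by blast
  have "\<forall>x\<in>P. ray_gen \<rho>' \<bullet> y0 \<le> ray_gen \<rho>' \<bullet> x"
    using assms(2,6) mem_P_iff by (fastforce simp: slack_def)
  then have "ray_gen \<rho>' \<in> \<rho>"
    using inner_normal_cone_if_min_at_rel_interior[OF y0 \<open>G \<subseteq> P\<close>] assms(4) by blast
  then show ?thesis using ray_eqI assms(1,2) by blast
qed

lemma ray_tight:
  assumes r: "\<rho> \<in> R"
  shows "\<exists>y\<in>P. slack \<rho> y = 0"
proof (rule ccontr)
  assume "\<not> (\<exists>y\<in>P. slack \<rho> y = 0)"
  then have pos: "\<forall>y\<in>P. slack \<rho> y > 0" using mem_P_iff r by (metis less_eq_real_def)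
  obtain G where G: "G face_of P" "G \<noteq> {}" "\<rho> = inner_normal_cone P G"
    using ray_normal_cone r by blast
  obtain y0 where y0: "y0 \<in> rel_interior G"
    using G rel_interior_eq_empty face_of_imp_convex by blast
  have "G \<subseteq> P" using G face_of_imp_subset by blast
  then have y0G: "y0 \<in> G" and y0P: "y0 \<in> P" using y0 rel_interior_subset by auto
  have strict: "slack \<rho>' y0 > 0" if "\<rho>' \<in> R" for \<rho>'
    using ray_eq_if_tight_at_rel_interior[OF r that G(1,3) y0] pos y0P mem_P_iff that
    by (metis less_eq_real_def)
  \<comment> \<open>all inequalities are strict at \<open>y0\<close>, so \<open>y0\<close> can be moved against \<open>ray_gen \<rho>\<close> inside \<open>P\<close>\<close>
  have "\<forall>\<^sub>F \<epsilon> in at_right 0. \<forall>\<rho>'\<in>R. 0 < slack \<rho>' (y0 - \<epsilon> *\<^sub>R ray_gen \<rho>)"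
  proof (rule eventually_ball_finite[OF finite_rays], rule ballI)
    fix \<rho>' assume "\<rho>' \<in> R"
    have "((\<lambda>\<epsilon>. slack \<rho>' (y0 - \<epsilon> *\<^sub>R ray_gen \<rho>)) \<longlongrightarrow> slack \<rho>' (y0 - 0 *\<^sub>R ray_gen \<rho>)) (at_right 0)"
      unfolding slack_def by (intro tendsto_intros)
    then show "\<forall>\<^sub>F \<epsilon> in at_right 0. 0 < slack \<rho>' (y0 - \<epsilon> *\<^sub>R ray_gen \<rho>)"
      using strict[OF \<open>\<rho>' \<in> R\<close>] by (simp add: order_tendstoD(1))
  qed
  then have "\<forall>\<^sub>F \<epsilon> in at_right (0::real). 0 < \<epsilon> \<and> (\<forall>\<rho>'\<in>R. 0 < slack \<rho>' (y0 - \<epsilon> *\<^sub>R ray_gen \<rho>))"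
    using eventually_at_right_less eventually_conj by blast
  then obtain \<epsilon> :: real where \<epsilon>: "0 < \<epsilon>" "\<forall>\<rho>'\<in>R. 0 < slack \<rho>' (y0 - \<epsilon> *\<^sub>R ray_gen \<rho>)"
    using eventually_happens[of _ "at_right (0::real)"] by auto
  then have "y0 - \<epsilon> *\<^sub>R ray_gen \<rho> \<in> P" using mem_P_iff by (auto intro: less_imp_le)
  moreover have "ray_gen \<rho> \<in> inner_normal_cone P G" using ray_gen_mem[OF r] G(3) by simp
  ultimately have "ray_gen \<rho> \<bullet> y0 \<le> ray_gen \<rho> \<bullet> (y0 - \<epsilon> *\<^sub>R ray_gen \<rho>)"
    using y0G by (auto simp: inner_normal_cone_def)
  then have "\<epsilon> * (ray_gen \<rho> \<bullet> ray_gen \<rho>) \<le> 0" by (simp add: inner_diff_right)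
  then have "ray_gen \<rho> \<bullet> ray_gen \<rho> \<le> 0" using \<epsilon>(1) by (simp add: mult_le_0_iff)
  then show False using ray_gen_nonzero[OF r] by (metis inner_gt_zero_iff not_le)
qed

lemma ray_gen_min_iff_slack_eq_0:
  assumes "\<rho> \<in> R" "v \<in> P"
  shows "(\<forall>x\<in>P. ray_gen \<rho> \<bullet> v \<le> ray_gen \<rho> \<bullet> x) \<longleftrightarrow> slack \<rho> v = 0"
proof
  assume min: "\<forall>x\<in>P. ray_gen \<rho> \<bullet> v \<le> ray_gen \<rho> \<bullet> x"
  obtain y where "y \<in> P" "slack \<rho> y = 0" using ray_tight[OF assms(1)] by blast
  then have "slack \<rho> v \<le> 0" using min by (force simp: slack_def)
  then show "slack \<rho> v = 0" using assms mem_P_iff by force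
next
  assume "slack \<rho> v = 0"
  then show "\<forall>x\<in>P. ray_gen \<rho> \<bullet> v \<le> ray_gen \<rho> \<bullet> x"
    using assms(1) mem_P_iff by (fastforce simp: slack_def)
qed

lemma face_has_vertex:
  assumes "G face_of P" "G \<noteq> {}"
  obtains w where "w \<in> G" "w extreme_point_of P"
proof -
  have "compact G" "convex G"
    using face_of_imp_compact[OF convex_P compact_P assms(1)] face_of_imp_convex assms(1) by blast+
  then obtain w where "w extreme_point_of G" using extreme_point_exists_convex assms(2) by blast
  then show ?thesis using that extreme_point_of_face[OF assms(1)] by blast
qed

lemma vertex_cone_in_fan: "v extreme_point_of P \<Longrightarrow> inner_normal_cone P {v} \<in> normal_fan A"
  unfolding normal_fan_def using face_of_singleton by blast

lemma vertex_cone_max: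
  assumes v: "v extreme_point_of P"
  shows "inner_normal_cone P {v} \<in> max_cones A"
proof -
  have "\<tau> = inner_normal_cone P {v}"
    if \<tau>: "\<tau> \<in> normal_fan A" "inner_normal_cone P {v} \<subseteq> \<tau>" for \<tau>
  proof -
    obtain G where G: "G face_of P" "G \<noteq> {}" "\<tau> = inner_normal_cone P G"
      using \<tau>(1) by (auto simp: normal_fan_def)
    obtain w where w: "w \<in> G" "w extreme_point_of P" using face_has_vertex G by blast
    have \<tau>w: "\<tau> \<subseteq> inner_normal_cone P {w}" using G(3) inner_normal_cone_antimono w(1) by simp
    \<comment> \<open>an exposing functional of the vertex \<open>v\<close> is also minimised at \<open>w\<close>, hence \<open>w = v\<close>\<close>
    have "{v} exposed_face_of P"
      using exposed_face_of_polyhedron[OF polytope_imp_polyhedron[OF polytope_P]] face_of_singleton v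
      by blast
    then obtain a c where ac: "P \<subseteq> {x. a \<bullet> x \<le> c}" "{v} = P \<inter> {x. a \<bullet> x = c}"
      unfolding exposed_face_of_def by blast
    have "- a \<in> inner_normal_cone P {v}" using ac by (auto simp: inner_normal_cone_def)
    then have "- a \<in> inner_normal_cone P {w}" using \<tau>(2) \<tau>w by blast
    moreover have "v \<in> P" "a \<bullet> v = c" "w \<in> P" using ac w(2) extreme_point_of_def by auto
    ultimately have "w \<in> P \<inter> {x. a \<bullet> x = c}" using ac by (force simp: inner_normal_cone_def)
    then have "w = v" using ac by blast
    then show ?thesis using \<tau>(2) \<tau>w by blast
  qed
  then show ?thesis unfolding max_cones_def using vertex_cone_in_fan[OF v] by blast
qed

lemma max_cone_eq_vertex_cone:
  assumes "\<sigma> \<in> max_cones A"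
  obtains v where "v \<in> A" "\<sigma> = inner_normal_cone P {realv v}"
proof -
  obtain G where G: "G face_of P" "G \<noteq> {}" "\<sigma> = inner_normal_cone P G"
    using assms by (auto simp: max_cones_def normal_fan_def)
  obtain w where w: "w \<in> G" "w extreme_point_of P" using face_has_vertex G by blast
  obtain v where "v \<in> A" "w = realv v"
    using extreme_point_of_convex_hull w(2) by (metis convA_def imageE)
  moreover have "inner_normal_cone P {w} = \<sigma>"
    using assms vertex_cone_in_fan[OF w(2)] inner_normal_cone_antimono[OF w(1)] G(3)
    by (auto simp: max_cones_def)
  ultimately show ?thesis using that by blast
qed

lemma slack_eq_0_if_ray_in_vertex_cone:
  assumes "\<rho> \<in> R" "v \<in> A" "\<rho> \<subseteq> inner_normal_cone P {realv v}"
  shows "slack \<rho> (realv v) = 0"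
proof -
  have "ray_gen \<rho> \<in> inner_normal_cone P {realv v}" using assms ray_gen_mem by blast
  then show ?thesis
    using ray_gen_min_iff_slack_eq_0[OF assms(1) realv_mem_P[OF assms(2)]]
    by (simp add: inner_normal_cone_def)
qed

lemma max_cone_containing_tight_rays:
  assumes a: "a \<in> A"
  obtains \<sigma> where "\<sigma> \<in> max_cones A" "\<forall>\<rho>\<in>R. slack \<rho> (realv a) = 0 \<longrightarrow> \<rho> \<subseteq> \<sigma>"
proof -
  \<comment> \<open>the inequalities tight at \<open>a\<close> cut out the face \<open>h \<bullet> x = c\<close>; the normal cone of any of its
    vertices contains their rays\<close>
  define K where "K = {\<rho>\<in>R. slack \<rho> (realv a) = 0}"
  have "finite K" using finite_rays by (simp add: K_def)
  define h where "h = (\<Sum>\<rho>\<in>K. ray_gen \<rho>)"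
  define c where "c = - (\<Sum>\<rho>\<in>K. real_of_int (b \<rho>))"
  have h_slack: "h \<bullet> x - c = (\<Sum>\<rho>\<in>K. slack \<rho> x)" for x
    by (simp add: h_def c_def slack_def inner_sum_left sum.distrib)
  have K_nonneg: "\<rho> \<in> K \<Longrightarrow> x \<in> P \<Longrightarrow> 0 \<le> slack \<rho> x" for \<rho> x
    using mem_P_iff K_def by auto
  have "x \<in> P \<Longrightarrow> h \<bullet> x \<ge> c" for x
    using h_slack[of x] sum_nonneg[of K "\<lambda>\<rho>. slack \<rho> x"] K_nonneg by force
  then have "P \<inter> {x. h \<bullet> x = c} face_of P"
    by (intro face_of_Int_supporting_hyperplane_ge[OF convex_P]) auto
  moreover have "realv a \<in> P \<inter> {x. h \<bullet> x = c}"
    using h_slack[of "realv a"] realv_mem_P[OF a] by (simp add: K_def)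
  ultimately obtain v where v: "v \<in> P" "h \<bullet> v = c" "v extreme_point_of P"
    using face_has_vertex by blast
  have "\<forall>\<rho>\<in>K. slack \<rho> v = 0"
    using h_slack[of v] v(2) sum_nonneg_eq_0_iff[OF \<open>finite K\<close>, of "\<lambda>\<rho>. slack \<rho> v"] K_nonneg[OF _ v(1)]
    by simp
  then have gen: "ray_gen \<rho> \<in> inner_normal_cone P {v}" if "\<rho> \<in> K" for \<rho>
    using that ray_gen_min_iff_slack_eq_0[OF _ v(1), of \<rho>] by (simp add: K_def inner_normal_cone_def)
  have "\<rho> \<subseteq> inner_normal_cone P {v}" if "\<rho> \<in> K" for \<rho>
  proof
    fix u assume "u \<in> \<rho>"
    moreover have "\<rho> \<in> R" using that by (simp add: K_def)
    ultimately obtain t where "t \<ge> 0" "u = t *\<^sub>R ray_gen \<rho>"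
      using ray_eq_halfline by blast
    then show "u \<in> inner_normal_cone P {v}" using gen[OF that] inner_normal_cone_scaleR by simp
  qed
  then show ?thesis using that vertex_cone_max[OF v(3)] by (auto simp: K_def)
qed

section \<open>The Cox monomial map\<close>

definition cox_mon :: "((real^'n) set \<Rightarrow> real) \<Rightarrow> int^'n \<Rightarrow> real" where
  "cox_mon x a = (\<Prod>\<rho>\<in>R. x \<rho> ^ nat (idot (F \<rho>) a + b \<rho>))"

lemma f_cox_eq: "f_cox A F b c x = (\<Sum>a\<in>A. c a * cox_mon x a)"
  by (simp add: f_cox_def cox_mon_def)

lemma cox_mon_nonneg: "x \<in> nonneg_orthant A \<Longrightarrow> 0 \<le> cox_mon x a"
  unfolding cox_mon_def nonneg_orthant_def by (auto intro!: prod_nonneg)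

lemma cox_mon_eq_0_iff:
  assumes "a \<in> A"
  shows "cox_mon x a = 0 \<longleftrightarrow> (\<exists>\<rho>\<in>R. x \<rho> = 0 \<and> slack \<rho> (realv a) \<noteq> 0)"
proof -
  have "x \<rho> ^ nat (idot (F \<rho>) a + b \<rho>) = 0 \<longleftrightarrow> x \<rho> = 0 \<and> slack \<rho> (realv a) \<noteq> 0"
    if "\<rho> \<in> R" for \<rho>
    using cox_exponent_nonneg[OF assms that] by (auto simp: slack_realv)
  then show ?thesis
    unfolding cox_mon_def using finite_rays by (simp add: prod_zero_iff)
qed

lemma mem_Z_A_iff:
  "(\<lambda>\<rho>. complex_of_real (x \<rho>)) \<in> Z_A A \<longleftrightarrow>
    (\<forall>\<sigma>\<in>max_cones A. \<exists>\<rho>\<in>R. \<not> \<rho> \<subseteq> \<sigma> \<and> x \<rho> = 0)"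
  using finite_rays by (simp add: Z_A_def prod_zero_iff) blast

lemma Z_A_iff_cox_mon_eq_0:
  "(\<lambda>\<rho>. complex_of_real (x \<rho>)) \<in> Z_A A \<longleftrightarrow> (\<forall>a\<in>A. cox_mon x a = 0)"
  unfolding mem_Z_A_iff
proof (intro iffI ballI)
  fix a assume Z: "\<forall>\<sigma>\<in>max_cones A. \<exists>\<rho>\<in>R. \<not> \<rho> \<subseteq> \<sigma> \<and> x \<rho> = 0" and a: "a \<in> A"
  obtain \<sigma> where \<sigma>: "\<sigma> \<in> max_cones A" "\<forall>\<rho>\<in>R. slack \<rho> (realv a) = 0 \<longrightarrow> \<rho> \<subseteq> \<sigma>"
    using max_cone_containing_tight_rays[OF a] by blast
  then obtain \<rho> where "\<rho> \<in> R" "\<not> \<rho> \<subseteq> \<sigma>" "x \<rho> = 0" using Z by blast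
  then show "cox_mon x a = 0" using \<sigma>(2) cox_mon_eq_0_iff[OF a] by blast
next
  fix \<sigma> assume mon: "\<forall>a\<in>A. cox_mon x a = 0" and \<sigma>: "\<sigma> \<in> max_cones A"
  obtain v where v: "v \<in> A" "\<sigma> = inner_normal_cone P {realv v}"
    using max_cone_eq_vertex_cone[OF \<sigma>] by blast
  then obtain \<rho> where "\<rho> \<in> R" "x \<rho> = 0" "slack \<rho> (realv v) \<noteq> 0"
    using mon cox_mon_eq_0_iff by blast
  then show "\<exists>\<rho>\<in>R. \<not> \<rho> \<subseteq> \<sigma> \<and> x \<rho> = 0"
    using slack_eq_0_if_ray_in_vertex_cone v by blast
qed

definition cox_point :: "((real^'n) set \<Rightarrow> real) \<Rightarrow> int^'n \<Rightarrow> complex" where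
  "cox_point x a = (if a \<in> A then complex_of_real (cox_mon x a) else 0)"

lemma cox_mon_eq_exp:
  assumes "a \<in> A" "\<forall>\<rho>\<in>R. x \<rho> = 0 \<longrightarrow> slack \<rho> (realv a) = 0"
    "\<forall>\<rho>\<in>R. x \<rho> \<noteq> 0 \<longrightarrow> x \<rho> = exp (z \<rho>)"
  shows "cox_mon x a = exp (\<Sum>\<rho>\<in>R. z \<rho> * slack \<rho> (realv a))"
proof -
  have "x \<rho> ^ nat (idot (F \<rho>) a + b \<rho>) = exp (z \<rho> * slack \<rho> (realv a))" if "\<rho> \<in> R" for \<rho>
    using assms that cox_exponent_nonneg[OF assms(1) that]
    by (cases "x \<rho> = 0") (auto simp: slack_realv mult.commute simp flip: exp_of_nat_mult)
  then show ?thesis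
    unfolding cox_mon_def using finite_rays by (simp add: exp_sum)
qed

lemma cox_point_torus:
  assumes "\<forall>\<rho>\<in>R. x \<rho> > 0"
  shows "\<exists>u t. u \<noteq> 0 \<and> (\<forall>i. t $ i \<noteq> 0) \<and> cox_point x = (\<lambda>a. if a \<in> A then u * lmono t a else 0)"
proof -
  define s where "s = (\<Sum>\<rho>\<in>R. ln (x \<rho>) *\<^sub>R ray_gen \<rho>)"
  define u where "u = complex_of_real (exp (\<Sum>\<rho>\<in>R. ln (x \<rho>) * of_int (b \<rho>)))"
  define t :: "complex^'n" where "t = (\<chi> i. complex_of_real (exp (s $ i)))"
  have "cox_mon x a = exp (s \<bullet> realv a + (\<Sum>\<rho>\<in>R. ln (x \<rho>) * of_int (b \<rho>)))" if "a \<in> A" for a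
  proof -
    have "cox_mon x a = exp (\<Sum>\<rho>\<in>R. ln (x \<rho>) * slack \<rho> (realv a))"
      by (intro cox_mon_eq_exp[OF that]) (use assms in auto)
    also have "(\<Sum>\<rho>\<in>R. ln (x \<rho>) * slack \<rho> (realv a)) =
        s \<bullet> realv a + (\<Sum>\<rho>\<in>R. ln (x \<rho>) * of_int (b \<rho>))"
      by (simp add: s_def slack_def inner_sum_left distrib_left sum.distrib)
    finally show ?thesis .
  qed
  then have "cox_point x a = (if a \<in> A then u * lmono t a else 0)" for a
    by (simp add: cox_point_def u_def t_def lmono_exp exp_add mult.commute)
  then show ?thesis by (intro exI[of _ u] exI[of _ t]) (auto simp: u_def t_def)
qed

lemma cox_point_in_Y_hat:
  assumes x: "x \<in> nonneg_orthant A"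
  shows "cox_point x \<in> Y_hat A"
  unfolding Y_hat_def zariski_closure_def
proof (intro CollectI conjI allI impI ballI)
  fix a assume "a \<notin> A" then show "cox_point x a = 0" by (simp add: cox_point_def)
next
  fix p assume p: "p \<in> polyfun A"
    and vanish: "\<forall>s\<in>{y. \<exists>u t. u \<noteq> 0 \<and> (\<forall>i. t $ i \<noteq> 0) \<and> y = (\<lambda>a. if a \<in> A then u * lmono t a else 0)}. p s = 0"
  \<comment> \<open>approximate \<open>x\<close> by points with positive coordinates, whose images lie on the torus orbit\<close>
  define xk where "xk k \<rho> = x \<rho> + inverse (real (Suc k))" for k \<rho>
  have "\<forall>\<rho>\<in>R. xk k \<rho> > 0" for k
    using x by (auto simp: xk_def nonneg_orthant_def intro: add_nonneg_pos)
  then have "p (cox_point (xk k)) = 0" for k using vanish cox_point_torus by blast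
  moreover have "(\<lambda>k. p (cox_point (xk k))) \<longlonglongrightarrow> p (cox_point x)"
  proof (rule polyfun_tendsto[OF p], intro ballI)
    fix a assume "a \<in> A"
    have "(\<lambda>k. xk k \<rho>) \<longlonglongrightarrow> x \<rho>" for \<rho>
      unfolding xk_def using tendsto_add[OF tendsto_const LIMSEQ_inverse_real_of_nat] by simp
    then have "(\<lambda>k. cox_mon (xk k) a) \<longlonglongrightarrow> cox_mon x a"
      unfolding cox_mon_def by (intro tendsto_prod tendsto_power) auto
    then show "(\<lambda>k. cox_point (xk k) a) \<longlonglongrightarrow> cox_point x a"
      using \<open>a \<in> A\<close> by (simp add: cox_point_def tendsto_of_real)
  qed
  ultimately show "p (cox_point x) = 0" by (simp add: LIMSEQ_const_iff)
qed

section \<open>Surjectivity onto the nonnegative part of \<open>Y_hat A\<close>\<close>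

lemma slack_functionals_independent:
  assumes "\<forall>\<rho>\<in>R. ray_gen \<rho> \<bullet> p + of_int (b \<rho>) * t = 0"
  shows "p = 0 \<and> t = 0"
proof -
  have shift: "slack \<rho> (q + s *\<^sub>R d) = slack \<rho> q + s * (ray_gen \<rho> \<bullet> d)" for \<rho> q s d
    by (simp add: slack_def inner_add_right algebra_simps)
  have bounded_P: "bounded P" using compact_P compact_imp_bounded by blast
  obtain a0 where a0: "a0 \<in> P" using P_nonempty by blast
  show ?thesis
  proof (cases "t = 0")
    case True
    then have "\<forall>s\<ge>0. a0 + s *\<^sub>R p \<in> P"
      using assms a0 by (simp add: mem_P_iff shift)
    then show ?thesis using bounded_halfline_eq_0[OF bounded_P] True by blast
  next
    case False
    \<comment> \<open>then all inequalities are tight at \<open>q0\<close>, so \<open>P\<close> contains every halfline from \<open>q0\<close> through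
      a point of \<open>P\<close>, and \<open>P = {q0}\<close>\<close>
    define q0 where "q0 = (1 / t) *\<^sub>R p"
    have tight: "slack \<rho> q0 = 0" if "\<rho> \<in> R" for \<rho>
      using assms that False by (simp add: slack_def q0_def field_simps)
    have "x = q0" if x: "x \<in> P" for x
    proof -
      have "slack \<rho> (q0 + s *\<^sub>R (x - q0)) = slack \<rho> q0 + s * (slack \<rho> x - slack \<rho> q0)" for \<rho> s
        by (simp add: slack_def inner_add_right inner_diff_right algebra_simps)
      then have "slack \<rho> (q0 + s *\<^sub>R (x - q0)) = s * slack \<rho> x" if "\<rho> \<in> R" for \<rho> s
        using tight[OF that] by simp
      then have "\<forall>s\<ge>0. q0 + s *\<^sub>R (x - q0) \<in> P"
        using x by (simp add: mem_P_iff)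
      then show ?thesis using bounded_halfline_eq_0[OF bounded_P] by fastforce
    qed
    then have "aff_dim P \<le> aff_dim {q0}" by (intro aff_dim_subset) blast
    then show ?thesis using aff_dim_convA by simp
  qed
qed

lemma span_slack_vectors: "span ((\<lambda>\<rho>. (ray_gen \<rho>, real_of_int (b \<rho>))) ` R) = UNIV"
proof (rule ccontr)
  assume "span ((\<lambda>\<rho>. (ray_gen \<rho>, real_of_int (b \<rho>))) ` R) \<noteq> UNIV"
  then obtain p t where "(p, t) \<noteq> 0" and orth:
    "\<forall>x\<in>span ((\<lambda>\<rho>. (ray_gen \<rho>, real_of_int (b \<rho>))) ` R). (p, t) \<bullet> x = 0"
    using span_not_UNIV_orthogonal by (metis surj_pair)
  then have "(ray_gen \<rho>, real_of_int (b \<rho>)) \<bullet> (p, t) = 0" if "\<rho> \<in> R" for \<rho>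
  proof -
    have "(ray_gen \<rho>, real_of_int (b \<rho>)) \<in> span ((\<lambda>\<rho>. (ray_gen \<rho>, real_of_int (b \<rho>))) ` R)"
      using that by (intro span_base) blast
    then show ?thesis using orth by (auto simp: inner_commute mult.commute)
  qed
  then have "\<forall>\<rho>\<in>R. ray_gen \<rho> \<bullet> p + of_int (b \<rho>) * t = 0"
    by (simp add: inner_commute mult.commute)
  then show False using slack_functionals_independent \<open>(p, t) \<noteq> 0\<close> by (simp add: zero_prod_def)
qed

lemma inj_on_ray_gen: "inj_on ray_gen R"
  by (metis inj_onI ray_eqI ray_gen_mem)

lemma affine_eq_slack_combination:
  obtains z where "\<forall>p. w \<bullet> p + w0 = (\<Sum>\<rho>\<in>R. z \<rho> * slack \<rho> p)"
proof -
  let ?W = "\<lambda>\<rho>. (ray_gen \<rho>, real_of_int (b \<rho>))"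
  have "inj_on ?W R" using inj_on_ray_gen by (auto simp: inj_on_def)
  have "(w, w0) \<in> range (\<lambda>u. \<Sum>v\<in>?W ` R. u v *\<^sub>R v)"
    using span_slack_vectors span_finite[OF finite_imageI[OF finite_rays, of ?W]] by simp
  then obtain u where "(w, w0) = (\<Sum>v\<in>?W ` R. u v *\<^sub>R v)" by (rule rangeE)
  then have eq: "(w, w0) = (\<Sum>\<rho>\<in>R. u (?W \<rho>) *\<^sub>R ?W \<rho>)"
    by (simp add: sum.reindex[OF \<open>inj_on ?W R\<close>])
  have "w \<bullet> p + w0 = (\<Sum>\<rho>\<in>R. u (?W \<rho>) * slack \<rho> p)" for p
  proof -
    have "w \<bullet> p + w0 = (w, w0) \<bullet> (p, 1)" by simp
    also have "\<dots> = (\<Sum>\<rho>\<in>R. u (?W \<rho>) *\<^sub>R ?W \<rho>) \<bullet> (p, 1)" by (subst eq) (rule refl)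
    also have "\<dots> = (\<Sum>\<rho>\<in>R. u (?W \<rho>) * slack \<rho> p)"
      by (simp add: inner_sum_left slack_def distrib_left)
    finally show ?thesis .
  qed
  then show ?thesis using that[of "\<lambda>\<rho>. u (?W \<rho>)"] by blast
qed

lemma ln_eq_slack_combination:
  assumes y: "y \<in> Y_hat A" and y_real: "\<forall>a\<in>A. y a = of_real (r a) \<and> r a \<ge> 0"
    and "S \<subseteq> A" and S_pos: "\<forall>s\<in>S. r s > 0"
  obtains z where "\<forall>s\<in>S. ln (r s) = (\<Sum>\<rho>\<in>R. z \<rho> * slack \<rho> (realv s))"
proof -
  obtain V where V: "V \<subseteq> realv ` S" "\<not> affine_dependent V" "affine hull (realv ` S) = affine hull V"
    using affine_basis_exists[of "realv ` S"] by blast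
  define B where "B = {c\<in>S. realv c \<in> V}"
  have VB: "V = realv ` B" and "B \<subseteq> S" using V(1) by (auto simp: B_def)
  obtain w w0 where "\<forall>v\<in>V. ln (r (inv realv v)) = w \<bullet> v + w0"
    using affine_independent_interpolation[OF V(2), where f = "\<lambda>v. ln (r (inv realv v))"] by blast
  then have interp: "\<forall>c\<in>B. ln (r c) = w \<bullet> realv c + w0"
    using VB by (auto simp: inv_f_f[OF inj_realv])
  have "ln (r s) = w \<bullet> realv s + w0" if s: "s \<in> S" for s
  proof (rule ln_affine_on_affine_hull[OF finite_A y y_real _ _ _ _ _ interp])
    show "B \<subseteq> A" "s \<in> A" using \<open>B \<subseteq> S\<close> \<open>S \<subseteq> A\<close> s by auto
    show "\<not> affine_dependent (realv ` B)" using V(2) VB by simp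
    show "\<forall>c\<in>B. r c > 0" using S_pos \<open>B \<subseteq> S\<close> by blast
    show "realv s \<in> affine hull (realv ` B)"
      using V(3) VB hull_inc[of "realv s" "realv ` S"] s by auto
  qed
  moreover obtain z where "\<forall>p. w \<bullet> p + w0 = (\<Sum>\<rho>\<in>R. z \<rho> * slack \<rho> p)"
    using affine_eq_slack_combination by blast
  ultimately show ?thesis using that[of z] by simp
qed

lemma slack_realv_ge_1:
  assumes "\<rho> \<in> R" "a \<in> A" "slack \<rho> (realv a) \<noteq> 0"
  shows "slack \<rho> (realv a) \<ge> 1"
proof -
  have "idot (F \<rho>) a + b \<rho> \<noteq> 0" using assms(3) by (metis slack_realv of_int_0)
  then have "1 \<le> idot (F \<rho>) a + b \<rho>" using cox_exponent_nonneg[OF assms(2,1)] by linarith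
  then show ?thesis by (simp add: slack_realv del: of_int_add)
qed

lemma slack_scaled_combination:
  assumes "m = real N * real (card S) - 1" "m \<noteq> 0"
  shows "slack \<rho> ((1 / m) *\<^sub>R (real N *\<^sub>R (\<Sum>s\<in>S. realv s) - realv a)) =
    (real N * (\<Sum>s\<in>S. slack \<rho> (realv s)) - slack \<rho> (realv a)) / m"
proof -
  define g where "g = ray_gen \<rho>"
  define Sg where "Sg = (\<Sum>s\<in>S. g \<bullet> realv s)"
  have "slack \<rho> ((1 / m) *\<^sub>R (real N *\<^sub>R (\<Sum>s\<in>S. realv s) - realv a)) =
      (real N * Sg - g \<bullet> realv a + m * of_int (b \<rho>)) / m"
    using assms(2) by (simp add: slack_def g_def Sg_def inner_diff_right inner_sum_right field_simps)
  also have "real N * Sg - g \<bullet> realv a + m * of_int (b \<rho>) =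
      real N * (Sg + real (card S) * of_int (b \<rho>)) - (g \<bullet> realv a + of_int (b \<rho>))"
    by (simp add: assms(1) algebra_simps)
  also have "Sg + real (card S) * of_int (b \<rho>) = (\<Sum>s\<in>S. slack \<rho> (realv s))"
    by (simp add: Sg_def g_def slack_def sum.distrib)
  finally show ?thesis by (simp add: slack_def g_def)
qed

lemma face_point_of_support:
  assumes "S \<subseteq> A" "S \<noteq> {}" "a \<in> A"
    and tight: "\<forall>\<rho>\<in>R. (\<forall>s\<in>S. slack \<rho> (realv s) = 0) \<longrightarrow> slack \<rho> (realv a) = 0"
  obtains N :: nat where "real N * real (card S) - 1 > 0"
    "(1 / (real N * real (card S) - 1)) *\<^sub>R (real N *\<^sub>R (\<Sum>s\<in>S. realv s) - realv a) \<in> P"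
proof -
  have "finite S" using assms(1) finite_A finite_subset by blast
  then have "card S \<ge> 1" using assms(2) by (simp add: Suc_le_eq card_gt_0_iff)
  define N :: nat where "N = nat \<lceil>\<Sum>\<rho>\<in>R. slack \<rho> (realv a)\<rceil> + 2"
  have N: "slack \<rho> (realv a) < real N" if "\<rho> \<in> R" for \<rho>
  proof -
    have "slack \<rho> (realv a) \<le> (\<Sum>\<rho>\<in>R. slack \<rho> (realv a))"
      using that finite_rays realv_mem_P[OF assms(3)] mem_P_iff by (intro member_le_sum) auto
    then show ?thesis by (simp add: N_def) linarith
  qed
  define m where "m = real N * real (card S) - 1"
  have "real N \<ge> 2" "real (card S) \<ge> 1" using \<open>card S \<ge> 1\<close> by (simp_all add: N_def)
  then have "m > 0" using mult_mono[of 2 "real N" 1 "real (card S)"] by (simp add: m_def)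
  have "0 \<le> (real N * (\<Sum>s\<in>S. slack \<rho> (realv s)) - slack \<rho> (realv a)) / m" if \<rho>: "\<rho> \<in> R" for \<rho>
  proof (cases "\<forall>s\<in>S. slack \<rho> (realv s) = 0")
    case True
    then show ?thesis using tight \<rho> by simp
  next
    case False
    then obtain s0 where "s0 \<in> S" "slack \<rho> (realv s0) \<ge> 1"
      using slack_realv_ge_1[OF \<rho>] assms(1) by blast
    moreover have "\<forall>s\<in>S. 0 \<le> slack \<rho> (realv s)"
      using \<rho> assms(1) realv_mem_P mem_P_iff by blast
    ultimately have "1 \<le> (\<Sum>s\<in>S. slack \<rho> (realv s))"
      using member_le_sum[of s0 S "\<lambda>s. slack \<rho> (realv s)"] \<open>finite S\<close> by force
    then have "real N \<le> real N * (\<Sum>s\<in>S. slack \<rho> (realv s))"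
      using mult_left_mono[of 1 _ "real N"] by simp
    then show ?thesis using N[OF \<rho>] \<open>m > 0\<close> by simp
  qed
  then show ?thesis
    using that[of N] \<open>m > 0\<close> slack_scaled_combination[OF m_def] by (simp add: mem_P_iff m_def)
qed

lemma face_relation_of_support:
  assumes "S \<subseteq> A" "S \<noteq> {}" "a \<in> A"
    and "\<forall>\<rho>\<in>R. (\<forall>s\<in>S. slack \<rho> (realv s) = 0) \<longrightarrow> slack \<rho> (realv a) = 0"
  obtains N :: nat and \<theta> where "real N * real (card S) - 1 > 0"
    "\<forall>c\<in>A. \<theta> c \<in> \<rat> \<and> \<theta> c \<ge> 0" "sum \<theta> A = 1"
    "realv a + (real N * real (card S) - 1) *\<^sub>R (\<Sum>c\<in>A. \<theta> c *\<^sub>R realv c) = real N *\<^sub>R (\<Sum>s\<in>S. realv s)"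
proof -
  obtain N :: nat where N: "real N * real (card S) - 1 > 0"
    "(1 / (real N * real (card S) - 1)) *\<^sub>R (real N *\<^sub>R (\<Sum>s\<in>S. realv s) - realv a) \<in> P"
    using face_point_of_support[OF assms] by blast
  define m where "m = real N * real (card S) - 1"
  define q where "q = (1 / m) *\<^sub>R (real N *\<^sub>R (\<Sum>s\<in>S. realv s) - realv a)"
  have "q \<in> convex hull (realv ` A)" using N by (simp add: m_def q_def convA_def)
  moreover have "\<forall>i. q $ i \<in> \<rat>"
    by (simp add: q_def m_def realv_def Rats_divide Rats_diff Rats_mult Rats_sum)
  ultimately obtain \<theta> where \<theta>: "\<forall>c\<in>A. \<theta> c \<in> \<rat> \<and> \<theta> c \<ge> 0" "sum \<theta> A = 1"
    "(\<Sum>c\<in>A. \<theta> c *\<^sub>R realv c) = q"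
    using convex_hull_realv_rational_coords[OF finite_A] by blast
  moreover have "realv a + m *\<^sub>R q = real N *\<^sub>R (\<Sum>s\<in>S. realv s)"
    using N(1) by (simp add: q_def m_def)
  ultimately show ?thesis using that N(1) by (simp add: m_def)
qed

text \<open>The hypothesis on \<open>a\<close> says that \<open>realv a\<close> lies on the smallest face of \<open>P\<close> containing the
  support \<open>S\<close>.\<close>

lemma pos_on_face_of_support:
  assumes y: "y \<in> Y_hat A" and y_real: "\<forall>a\<in>A. y a = of_real (r a) \<and> r a \<ge> 0"
    and S_def: "S = {a\<in>A. r a > 0}" and "S \<noteq> {}" and a: "a \<in> A"
    and tight: "\<forall>\<rho>\<in>R. (\<forall>s\<in>S. slack \<rho> (realv s) = 0) \<longrightarrow> slack \<rho> (realv a) = 0"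
  shows "r a > 0"
proof (cases "a \<in> S")
  case False
  have "S \<subseteq> A" using S_def by blast
  obtain N :: nat and \<theta> where N: "real N * real (card S) - 1 > 0"
    and \<theta>: "\<forall>c\<in>A. \<theta> c \<in> \<rat> \<and> \<theta> c \<ge> 0" "sum \<theta> A = 1"
    and relation: "realv a + (real N * real (card S) - 1) *\<^sub>R (\<Sum>c\<in>A. \<theta> c *\<^sub>R realv c) =
      real N *\<^sub>R (\<Sum>s\<in>S. realv s)"
    using face_relation_of_support[OF \<open>S \<subseteq> A\<close> \<open>S \<noteq> {}\<close> a tight] by blast
  \<comment> \<open>on \<open>Y_hat A\<close> this relation compares \<open>r a\<close> with the positive values of \<open>r\<close> on \<open>S\<close>\<close>
  define m where "m = real N * real (card S) - 1"
  have \<theta>m: "m * \<theta> c \<ge> 0" if "c \<in> A" for c using \<theta>(1) N that by (simp add: m_def)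
  define \<gamma> where "\<gamma> c = (if c = a then 1 else 0) + m * \<theta> c - (if c \<in> S then real N else 0)" for c
  have sum_\<gamma>: "(\<Sum>c\<in>A. \<gamma> c *\<^sub>R f c) =
      f a + m *\<^sub>R (\<Sum>c\<in>A. \<theta> c *\<^sub>R f c) - real N *\<^sub>R (\<Sum>c\<in>S. f c)"
    for f :: "int^'n \<Rightarrow> 'z::real_vector"
  proof -
    have "(\<Sum>c\<in>A. \<gamma> c *\<^sub>R f c) = (\<Sum>c\<in>A. if c = a then f c else 0) +
        (\<Sum>c\<in>A. (m * \<theta> c) *\<^sub>R f c) - (\<Sum>c\<in>A. if c \<in> S then real N *\<^sub>R f c else 0)"
      unfolding sum.distrib[symmetric] sum_subtractf[symmetric]
      by (intro sum.cong) (auto simp: \<gamma>_def scaleR_add_left scaleR_diff_left)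
    then show ?thesis
      using a \<open>S \<subseteq> A\<close> finite_A
      by (simp add: sum.inter_restrict[symmetric] Int_absorb1 scaleR_sum_right flip: scaleR_scaleR)
  qed
  have "\<forall>c\<in>A. \<gamma> c > 0 \<longrightarrow> r c > 0"
  proof (rule Y_hat_rational_relation[OF finite_A y y_real, THEN conjunct1])
    show "\<forall>c\<in>A. \<gamma> c \<in> \<rat>"
      using \<theta>(1) by (simp add: \<gamma>_def m_def Rats_add Rats_diff Rats_mult)
    show "sum \<gamma> A = 0" using sum_\<gamma>[of "\<lambda>_. 1::real"] \<theta>(2) by (simp add: m_def)
    show "(\<Sum>c\<in>A. \<gamma> c *\<^sub>R realv c) = 0" using sum_\<gamma>[of realv] relation by (simp add: m_def)
    show "\<forall>c\<in>A. \<gamma> c < 0 \<longrightarrow> r c > 0"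
      using \<theta>m S_def by (force simp: \<gamma>_def split: if_splits)
  qed
  moreover have "\<gamma> a > 0"
    using False \<theta>m[OF a] by (simp add: \<gamma>_def)
  ultimately show ?thesis using a by blast
qed (use S_def in blast)

lemma nonneg_Y_hat_in_cox_image:
  assumes y: "y \<in> Y_hat A" and y_real: "\<forall>a\<in>A. y a = of_real (r a) \<and> r a \<ge> 0"
    and nonzero: "\<exists>a\<in>A. r a \<noteq> 0"
  obtains x where "x \<in> nonneg_orthant A" "\<forall>a\<in>A. cox_mon x a = r a"
proof -
  define S where "S = {a\<in>A. r a > 0}"
  have "S \<noteq> {}" using nonzero y_real by (force simp: S_def less_le)
  obtain z where z: "\<forall>s\<in>S. ln (r s) = (\<Sum>\<rho>\<in>R. z \<rho> * slack \<rho> (realv s))"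
    using ln_eq_slack_combination[OF y y_real] by (metis (mono_tags) S_def mem_Collect_eq subsetI)
  define K where "K = {\<rho>\<in>R. \<forall>s\<in>S. slack \<rho> (realv s) = 0}"
  define x where "x \<rho> = (if \<rho> \<in> R - K then exp (z \<rho>) else 0)" for \<rho>
  have "x \<in> nonneg_orthant A" by (auto simp: nonneg_orthant_def x_def)
  moreover have "cox_mon x a = r a" if a: "a \<in> A" for a
  proof (cases "a \<in> S")
    case True
    then have "cox_mon x a = exp (\<Sum>\<rho>\<in>R. z \<rho> * slack \<rho> (realv a))"
      by (intro cox_mon_eq_exp[OF a]) (auto simp: x_def K_def)
    also have "\<dots> = exp (ln (r a))" using z True by simp
    also have "\<dots> = r a" using True by (simp add: S_def)
    finally show ?thesis .
  next
    case False
    then obtain \<rho> where "\<rho> \<in> K" "slack \<rho> (realv a) \<noteq> 0"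
      using pos_on_face_of_support[OF y y_real S_def \<open>S \<noteq> {}\<close> a] a by (auto simp: K_def S_def)
    then have "cox_mon x a = 0" using cox_mon_eq_0_iff[OF a] by (auto simp: x_def K_def)
    moreover have "r a = 0" using False a y_real by (simp add: S_def less_le)
    ultimately show ?thesis by simp
  qed
  ultimately show ?thesis using that by blast
qed

lemma cox_point_image:
  "cox_point ` nonneg_orthant A \<subseteq> nonneg_Y_hat A"
  "nonneg_Y_hat A - {\<lambda>_. 0} \<subseteq> cox_point ` nonneg_orthant A"
proof -
  show "cox_point ` nonneg_orthant A \<subseteq> nonneg_Y_hat A"
    using cox_point_in_Y_hat cox_mon_nonneg by (auto simp: nonneg_Y_hat_def cox_point_def)
  show "nonneg_Y_hat A - {\<lambda>_. 0} \<subseteq> cox_point ` nonneg_orthant A"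
  proof
    fix y assume "y \<in> nonneg_Y_hat A - {\<lambda>_. 0}"
    then have y: "y \<in> Y_hat A" "\<forall>a\<in>A. y a = of_real (Re (y a)) \<and> Re (y a) \<ge> 0" "y \<noteq> (\<lambda>_. 0)"
      by (auto simp: nonneg_Y_hat_def complex_eq_iff)
    then have "\<exists>a\<in>A. Re (y a) \<noteq> 0"
      using Y_hat_vanishes_outside[OF y(1)] by (metis of_real_0 ext)
    then obtain x where "x \<in> nonneg_orthant A" "\<forall>a\<in>A. cox_mon x a = Re (y a)"
      using nonneg_Y_hat_in_cox_image[OF y(1,2)] by blast
    moreover have "y = cox_point x"
      using calculation(2) y(2) Y_hat_vanishes_outside[OF y(1)] by (auto simp: cox_point_def)
    ultimately show "y \<in> cox_point ` nonneg_orthant A" by blast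
  qed
qed

lemma cox_point_eq_0_iff: "cox_point x = (\<lambda>_. 0) \<longleftrightarrow> (\<lambda>\<rho>. complex_of_real (x \<rho>)) \<in> Z_A A"
  by (auto simp: Z_A_iff_cox_mon_eq_0 cox_point_def fun_eq_iff)

lemma f_cox_eq_cox_point: "f_cox A F b c x = (\<Sum>a\<in>A. c a * Re (cox_point x a))"
  by (simp add: f_cox_eq cox_point_def)

end

theorem mainTheorem9:
  fixes A :: "(int^'n) set" and c :: "int^'n \<Rightarrow> real"
    and F :: "(real^'n) set \<Rightarrow> int^'n" and b :: "(real^'n) set \<Rightarrow> int"
  assumes "finite A"
    and "aff_dim (convA A) = int CARD('n)"
    and "\<forall>\<rho>\<in>fan_rays A. prim_gen \<rho> (F \<rho>)"
    and "convA A = {p. \<forall>\<rho>\<in>fan_rays A. (\<Sum>i\<in>UNIV. of_int (F \<rho> $ i) * p $ i) + of_int (b \<rho>) \<ge> (0::real)}"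
  shows "strictly_A_copositive A c \<longleftrightarrow>
           ((\<forall>x\<in>nonneg_orthant A. f_cox A F b c x \<ge> 0) \<and>
            {x\<in>nonneg_orthant A. f_cox A F b c x = 0} =
            {x\<in>nonneg_orthant A. (\<lambda>\<rho>. complex_of_real (x \<rho>)) \<in> Z_A A})"
proof -
  interpret cox_setup A F b
    using assms by unfold_locales
  have "strictly_A_copositive A c \<longleftrightarrow>
      (\<forall>x\<in>nonneg_orthant A. f_cox A F b c x \<ge> 0) \<and>
      {x\<in>nonneg_orthant A. f_cox A F b c x = 0} = {x\<in>nonneg_orthant A. cox_point x = (\<lambda>_. 0)}"
    unfolding strictly_A_copositive_iff
    by (rule pos_on_image_iff[OF cox_point_image]) (simp_all add: f_cox_eq_cox_point)
  then show ?thesis by (simp add: cox_point_eq_0_iff)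
qed

end
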